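(* Let $N\ge 1$, let $q\in\mathbb{C}$ with $0<|q|<1$, let $r\in\mathbb{C}$, and let $L,M,R$ be nonnegative integers with $L+M+R=2N$ falling into one of the three cases (I) $L=M=0$, $R>0$; (II) $L=0$, $M,R>0$; (III) $L,M,R>0$. Let $G$, $A^i_\pm(z;\kappa)$, $B_\pm(z;\kappa)$, $c^j_\pm(z)$, $c_j(w)$, $f_1(z)$, $g_i(w)$ be as defined in the context (with the case (I), (II) or (III) determined by $L,M,R$). Then, as identities of formal power series (the scalar functions being expanded around $0$), $$\langle 0|e^G e^{-A_-^i(qw;\frac12)}=g_i(w)\,\langle 0|e^G e^{-A_+^i(q/w;\frac12)}\qquad(i=1,2,\dots,2N-1),$$ $$\langle 0|e^G e^{B_-(qz;\frac12)}=f_1(z)\,\langle 0|e^G e^{B_+(q/z;\frac12)},$$ $$\langle 0|e^G e^{c_-^j(qw)}=c_j(w)\,\langle 0|e^G e^{c_+^j(q/w)}\qquad(j=1,2,\dots,N).$$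
   Context: Notation: $[n]_q=\frac{q^n-q^{-n}}{q-q^{-1}}$; $\theta_m=1$ if $m$ is even and $\theta_m=0$ if $m$ is odd. Bosons: operators $a^i_m$ ($1\le i\le 2N$, $m\in\mathbb{Z}$) and $c^j_m$ ($1\le j\le N$, $m\in\mathbb{Z}$) with $[a^i_m,a^k_n]=(-1)^{i+1}\delta_{i,k}\delta_{m+n,0}\frac{[m]_q^2}{m}$ and $[c^j_m,c^l_n]=\delta_{j,l}\delta_{m+n,0}\frac{[m]_q^2}{m}$ for $m\neq0$, all other commutators among them vanishing. The vector $\langle 0|\neq0$ satisfies $\langle 0|a^i_{-m}=\langle 0|c^j_{-m}=0$ for all $m\ge 0$. Auxiliary bosons: $A^i_m=(-1)^{i+1}(a^i_m+a^{i+1}_m)$ for $1\le i\le 2N-1$; $A^{*1}_m=\frac{1}{2N}\big((2N-1)a^1_m-\sum_{l=2}^{2N}a^l_m\big)$; $A^{*2N}_m=\frac{1}{2N}\sum_{l=1}^{2N}a^l_m$. Generating series: $A^i_\pm(z;\kappa)=\mp\sum_{m\ge1}\frac{A^i_{\pm m}}{[m]_q}q^{\kappa m}z^{\mp m}$, $B_\pm(z;\kappa)=\mp\sum_{m\ge1}\frac{1}{[m]_q}\big(A^{*1}_{\pm m}-2(N-1)A^{*2N}_{\pm m}\big)q^{\kappa m}z^{\mp m}$, $c^j_\pm(z)=\mp\sum_{m\ge1}\frac{c^j_{\pm m}}{[m]_q}z^{\mp m}$. The operator $G$: $$G=-\frac12\sum_{m>0}\frac{mq^{-2m}}{[m]_q^2}\Big(\sum_{i=1}^{2N}(-1)^{i+1}(a^i_m)^2+\sum_{j=1}^N(c^j_m)^2\Big)+\sum_{m>0}\Big(\sum_{i=1}^{2N}\beta^i_m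 a^i_m+\sum_{j=1}^N\delta^j_m c^j_m\Big),$$ where $\delta^j_m=\frac{q^{-m}}{[m]_q}(1-2(-1)^{m/2})\theta_m$ for all $j$, and $\beta^i_m=\beta^{[1],i}_m,\beta^{[2],i}_m,\beta^{[3],i}_m$ in cases (I), (II), (III) respectively, with: $\beta^{[1],2s-1}_m=\beta^{[1],2s}_m=\frac{2(1-s)}{[m]_q}q^{-\frac32 m}\theta_m$ ($1\le s\le N$); $\beta^{[2],i}_m=\beta^{[1],i}_m-\frac{r^mq^{-\frac32m}}{[m]_q}+\epsilon^{[2],i}_m$, where $\epsilon^{[2],i}_m=0$ for $i\le M$, and for $M<i\le 2N$ it equals $\frac{r^mq^{-\frac52m}}{[m]_q}$ if $M$ is odd and $\frac{r^mq^{-\frac32m}}{[m]_q}$ if $M$ is even; $\beta^{[3],i}_m=\beta^{[1],i}_m-\frac{2(-1)^{m/2}q^{-\frac32m}}{[m]_q}\theta_m+\rho^i_m+\sigma^i_m$, where $\rho^i_m=0$ for $i\le L$, and for $L<i\le 2N$, $\rho^i_m=\frac{r^{-m}q^{-\frac52m}}{[m]_q}$ if $L$ is odd and $\frac{r^{-m}q^{-\frac32m}}{[m]_q}$ if $L$ is even; and $\sigma^i_m=0$ for $i\le L+M$, while for $L+M<i\le 2N$, $\sigma^i_m$ equals $\frac{r^mq^{\frac12m}}{[m]_q}$ ($L,M$ odd), $\frac{r^mq^{-\frac12m}}{[m]_q}$ ($L$ odd, $M$ even), $\frac{r^mq^{-\frac52m}}{[m]_q}$ ($L$ even, $M$ odd),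 $\frac{r^mq^{-\frac32m}}{[m]_q}$ ($L,M$ even). Functions: $c_j(w)=1+w^2$. With $\varphi^{[1]}(z)=(1-qz^2)^{\frac{1-N}{2N}}$; $\varphi^{[2]}(z)=\varphi^{[1]}(z)(1-rz/q)^{\frac{1-2N}{2N}}$ if $M$ odd and $\varphi^{[2]}=\varphi^{[1]}$ if $M$ even; $\varphi^{[3]}(z)=\varphi^{[1]}(z)$ times $(1-z/(rq))^{\frac{1-2N}{2N}}$ ($L,M$ odd), $\{(1-z/(rq))(1-rqz)\}^{\frac{1-2N}{2N}}$ ($L$ odd, $M$ even), $(1-rz/q)^{\frac{1-2N}{2N}}$ ($L$ even, $M$ odd), $1$ ($L,M$ even): $f_1(z)=\varphi^{[1]}(z)$ in case (I), $(1-rz)\varphi^{[2]}(z)$ in case (II), $(1+z^2)\varphi^{[3]}(z)$ in case (III). $g_i=g^{[1]}_i,g^{[2]}_i,g^{[3]}_i$ in cases (I),(II),(III), where $g^{[1]}_i(w)=1$ for $i$ odd and $1-w^2$ for $i$ even; $g^{[2]}_i(w)=g^{[1]}_i(w)$ times $\frac{1}{1-rw/q}$ if $i=M$ with $M$ odd, $\frac{1}{1-rw}$ if $i=M$ with $M$ even, and $1$ otherwise; $g^{[3]}_i(w)=g^{[1]}_i(w)$ times: $\frac{1}{1-w/(qr)}$ if $i=L$, $L$ odd; $\frac{1}{1-w/r}$ if $i=L$, $L$ even; $\frac{1}{1-q^2rw}$ if $i=L+M$, $L,M$ odd; $\frac{1}{1-qrw}$ if $i=L+M$, $L$ odd, $M$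 even; $\frac{1}{1-rw/q}$ if $i=L+M$, $L$ even, $M$ odd; $\frac{1}{1-rw}$ if $i=L+M$, $L,M$ even; $1$ otherwise. *)

theory Defs
  imports Complex_Main "HOL-Library.Multiset" "HOL-Computational_Algebra.Formal_Power_Series"
begin

section \<open>Concrete (bra) Fock space\<close>

text \<open>Variables of the bra Fock space: VA i m stands for the creation mode a^i_m (m >= 1),
  VC j m for c^j_m (m >= 1).  A vector of the (completed) bra Fock space is a formal power
  series in these variables, i.e. a coefficient function on monomials (finite multisets of
  variables).\<close>

datatype bvar = VA nat nat | VC nat nat

type_synonym fock = "bvar multiset \<Rightarrow> complex"
type_synonym fop = "fock \<Rightarrow> fock"

definition qnum :: "complex \<Rightarrow> int \<Rightarrow> complex" where
  "qnum q n = (q powi n - q powi (- n)) / (q - inverse q)"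

definition theta :: "nat \<Rightarrow> complex" where
  "theta m = (if even m then 1 else 0)"

definition vac :: fock where
  "vac = (\<lambda>\<mu>. if \<mu> = {#} then 1 else 0)"

definition fsmul :: "complex \<Rightarrow> fock \<Rightarrow> fock" where
  "fsmul c F = (\<lambda>\<mu>. c * F \<mu>)"

definition fadd :: "fock \<Rightarrow> fock \<Rightarrow> fock" where
  "fadd F H = (\<lambda>\<mu>. F \<mu> + H \<mu>)"

definition cre :: "bvar \<Rightarrow> fop" where
  "cre x F = (\<lambda>\<mu>. if x \<in># \<mu> then F (\<mu> - {#x#}) else 0)"

definition der :: "bvar \<Rightarrow> fop" where
  "der x F = (\<lambda>\<mu>. of_nat (count \<mu> x + 1) * F (\<mu> + {#x#}))"

text \<open>Right action  F |-> F a^i_k  of the bosons on the bra Fock space.  For k > 0 it is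
  multiplication, for k < 0 it is the derivation fixed by the commutation relations and
  the vacuum condition, and a^i_0 (central, killing the vacuum) acts as 0.\<close>
definition aop :: "complex \<Rightarrow> nat \<Rightarrow> int \<Rightarrow> fop" where
  "aop q i k F =
     (if k > 0 then cre (VA i (nat k)) F
      else if k < 0 then fsmul ((-1) ^ (i + 1) * (qnum q (- k))\<^sup>2 / of_int (- k)) (der (VA i (nat (- k))) F)
      else (\<lambda>_. 0))"

definition cop :: "complex \<Rightarrow> nat \<Rightarrow> int \<Rightarrow> fop" where
  "cop q j k F =
     (if k > 0 then cre (VC j (nat k)) F
      else if k < 0 then fsmul ((qnum q (- k))\<^sup>2 / of_int (- k)) (der (VC j (nat (- k))) F)
      else (\<lambda>_. 0))"

definition Aop :: "complex \<Rightarrow> nat \<Rightarrow> int \<Rightarrow> fop" where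
  "Aop q i k F = fsmul ((-1) ^ (i + 1)) (fadd (aop q i k F) (aop q (i + 1) k F))"

definition Astar1 :: "complex \<Rightarrow> nat \<Rightarrow> int \<Rightarrow> fop" where
  "Astar1 q N k F = fsmul (1 / (2 * of_nat N))
     (\<lambda>\<mu>. (2 * of_nat N - 1) * aop q 1 k F \<mu> - (\<Sum>l = 2..2 * N. aop q l k F \<mu>))"

definition Astar2N :: "complex \<Rightarrow> nat \<Rightarrow> int \<Rightarrow> fop" where
  "Astar2N q N k F = fsmul (1 / (2 * of_nat N)) (\<lambda>\<mu>. \<Sum>l = 1..2 * N. aop q l k F \<mu>)"

definition Bmode :: "complex \<Rightarrow> nat \<Rightarrow> int \<Rightarrow> fop" where
  "Bmode q N k F = (\<lambda>\<mu>. Astar1 q N k F \<mu> - 2 * (of_nat N - 1) * Astar2N q N k F \<mu>)"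

text \<open>A series  X_-(z) = sum_{m>=1} z^m X_m  is encoded by its coefficient operators m |-> X_m;
  a series  X_+(z) = sum_{m>=1} z^(-m) X_m  likewise by m |-> X_m (coefficient of z^(-m)).
  The parameter qk stands for q^kappa.\<close>

definition Aminus :: "complex \<Rightarrow> nat \<Rightarrow> complex \<Rightarrow> nat \<Rightarrow> fop" where
  "Aminus q i qk m F = fsmul (qk ^ m / qnum q (int m)) (Aop q i (- int m) F)"

definition Aplus :: "complex \<Rightarrow> nat \<Rightarrow> complex \<Rightarrow> nat \<Rightarrow> fop" where
  "Aplus q i qk m F = fsmul (- (qk ^ m / qnum q (int m))) (Aop q i (int m) F)"

definition Bminus :: "complex \<Rightarrow> nat \<Rightarrow> complex \<Rightarrow> nat \<Rightarrow> fop" where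
  "Bminus q N qk m F = fsmul (qk ^ m / qnum q (int m)) (Bmode q N (- int m) F)"

definition Bplus :: "complex \<Rightarrow> nat \<Rightarrow> complex \<Rightarrow> nat \<Rightarrow> fop" where
  "Bplus q N qk m F = fsmul (- (qk ^ m / qnum q (int m))) (Bmode q N (int m) F)"

definition cminus :: "complex \<Rightarrow> nat \<Rightarrow> nat \<Rightarrow> fop" where
  "cminus q j m F = fsmul (1 / qnum q (int m)) (cop q j (- int m) F)"

definition cplus :: "complex \<Rightarrow> nat \<Rightarrow> nat \<Rightarrow> fop" where
  "cplus q j m F = fsmul (- (1 / qnum q (int m))) (cop q j (int m) F)"

text \<open>Substitution z = c w in X_-(z) (coefficient of w^m), and z = c / w in X_+(z)
  (z^(-m) = c^(-m) w^m); negation of a series.\<close>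
definition at_mul :: "complex \<Rightarrow> (nat \<Rightarrow> fop) \<Rightarrow> nat \<Rightarrow> fop" where
  "at_mul c X m F = fsmul (c ^ m) (X m F)"

definition at_div :: "complex \<Rightarrow> (nat \<Rightarrow> fop) \<Rightarrow> nat \<Rightarrow> fop" where
  "at_div c X m F = fsmul (inverse c ^ m) (X m F)"

definition sneg :: "(nat \<Rightarrow> fop) \<Rightarrow> nat \<Rightarrow> fop" where
  "sneg X m F = fsmul (-1) (X m F)"

definition comps :: "nat \<Rightarrow> nat list set" where
  "comps n = {ms. sum_list ms = n \<and> 0 \<notin> set ms}"

text \<open>F e^{X(w)} for X(w) = sum_{m>=1} w^m X_m (commuting X_m), as a formal power series
  in w with coefficients in the bra Fock space: the coefficient of w^n is
  sum_k 1/k! sum_{m_1+..+m_k=n} F X_{m_1} ... X_{m_k}.\<close>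
definition bra_exp :: "(nat \<Rightarrow> fop) \<Rightarrow> fock \<Rightarrow> nat \<Rightarrow> fock" where
  "bra_exp X F n = (\<lambda>\<mu>. \<Sum>ms\<in>comps n. (1 / fact (length ms)) * foldl (\<lambda>H m. X m H) F ms \<mu>)"

definition fps_act :: "complex fps \<Rightarrow> (nat \<Rightarrow> fock) \<Rightarrow> nat \<Rightarrow> fock" where
  "fps_act g S n = (\<lambda>\<mu>. \<Sum>k\<le>n. fps_nth g k * S (n - k) \<mu>)"

section \<open>The operator G\<close>

text \<open>qh stands for a fixed square root q^{1/2} of q; q^{a m/2} is written as qh^(a m).
  i ranges over 1..2N (s = (i+1) div 2 is the pair index).\<close>
definition beta1 :: "complex \<Rightarrow> complex \<Rightarrow> nat \<Rightarrow> nat \<Rightarrow> complex" where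
  "beta1 q qh i m = 2 * (1 - of_nat ((i + 1) div 2)) / qnum q (int m) * inverse qh ^ (3 * m) * theta m"

definition beta2 :: "complex \<Rightarrow> complex \<Rightarrow> complex \<Rightarrow> nat \<Rightarrow> nat \<Rightarrow> nat \<Rightarrow> complex" where
  "beta2 q qh r M i m = beta1 q qh i m - r ^ m * inverse qh ^ (3 * m) / qnum q (int m)
     + (if i \<le> M then 0
        else if odd M then r ^ m * inverse qh ^ (5 * m) / qnum q (int m)
        else r ^ m * inverse qh ^ (3 * m) / qnum q (int m))"

definition rho :: "complex \<Rightarrow> complex \<Rightarrow> complex \<Rightarrow> nat \<Rightarrow> nat \<Rightarrow> nat \<Rightarrow> complex" where
  "rho q qh r L i m =
     (if i \<le> L then 0
      else if odd L then inverse r ^ m * inverse qh ^ (5 * m) / qnum q (int m)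
      else inverse r ^ m * inverse qh ^ (3 * m) / qnum q (int m))"

definition sigma :: "complex \<Rightarrow> complex \<Rightarrow> complex \<Rightarrow> nat \<Rightarrow> nat \<Rightarrow> nat \<Rightarrow> nat \<Rightarrow> complex" where
  "sigma q qh r L M i m =
     (if i \<le> L + M then 0
      else if odd L \<and> odd M then r ^ m * qh ^ m / qnum q (int m)
      else if odd L \<and> even M then r ^ m * inverse qh ^ m / qnum q (int m)
      else if even L \<and> odd M then r ^ m * inverse qh ^ (5 * m) / qnum q (int m)
      else r ^ m * inverse qh ^ (3 * m) / qnum q (int m))"

definition beta3 :: "complex \<Rightarrow> complex \<Rightarrow> complex \<Rightarrow> nat \<Rightarrow> nat \<Rightarrow> nat \<Rightarrow> nat \<Rightarrow> complex" where
  "beta3 q qh r L M i m = beta1 q qh i m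
     - 2 * (-1) ^ (m div 2) * inverse qh ^ (3 * m) / qnum q (int m) * theta m
     + rho q qh r L i m + sigma q qh r L M i m"

text \<open>Case (I): L = M = 0; case (II): L = 0, M > 0; case (III): L, M > 0.\<close>
definition beta :: "complex \<Rightarrow> complex \<Rightarrow> complex \<Rightarrow> nat \<Rightarrow> nat \<Rightarrow> nat \<Rightarrow> nat \<Rightarrow> complex" where
  "beta q qh r L M i m =
     (if L = 0 \<and> M = 0 then beta1 q qh i m
      else if L = 0 then beta2 q qh r M i m
      else beta3 q qh r L M i m)"

definition delta :: "complex \<Rightarrow> nat \<Rightarrow> complex" where
  "delta q m = inverse q ^ m / qnum q (int m) * (1 - 2 * (-1) ^ (m div 2)) * theta m"

text \<open>Right action F |-> F G of the operator G on the bra Fock space (an infinite sum of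
  operators, taken coefficientwise; for every monomial only finitely many terms are nonzero).\<close>
definition Gop :: "complex \<Rightarrow> complex \<Rightarrow> complex \<Rightarrow> nat \<Rightarrow> nat \<Rightarrow> nat \<Rightarrow> fop" where
  "Gop q qh r N L M F = (\<lambda>\<mu>. \<Sum>k. (let m = Suc k in
      - (1 / 2) * (of_nat m * inverse q ^ (2 * m) / (qnum q (int m))\<^sup>2)
        * ((\<Sum>i = 1..2 * N. (-1) ^ (i + 1) * aop q i (int m) (aop q i (int m) F) \<mu>)
           + (\<Sum>j = 1..N. cop q j (int m) (cop q j (int m) F) \<mu>))
      + (\<Sum>i = 1..2 * N. beta q qh r L M i m * aop q i (int m) F \<mu>)
      + (\<Sum>j = 1..N. delta q m * cop q j (int m) F \<mu>)))"

text \<open>The bra  <0| e^G = sum_k <0| G^k / k!  (coefficientwise).\<close>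
definition vacG :: "complex \<Rightarrow> complex \<Rightarrow> complex \<Rightarrow> nat \<Rightarrow> nat \<Rightarrow> nat \<Rightarrow> fock" where
  "vacG q qh r N L M = (\<lambda>\<mu>. \<Sum>k. (Gop q qh r N L M ^^ k) vac \<mu> / fact k)"

section \<open>Scalar functions, expanded around 0\<close>

text \<open>powfps c k a is the expansion at 0 of (1 - c z^k)^a (generalized binomial series).\<close>
definition powfps :: "complex \<Rightarrow> nat \<Rightarrow> complex \<Rightarrow> complex fps" where
  "powfps c k a = fps_binomial a oo (fps_const (- c) * fps_X ^ k)"

definition alpha1 :: "nat \<Rightarrow> complex" where
  "alpha1 N = (1 - of_nat N) / (2 * of_nat N)"

definition alpha2 :: "nat \<Rightarrow> complex" where
  "alpha2 N = (1 - 2 * of_nat N) / (2 * of_nat N)"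

definition phi1 :: "complex \<Rightarrow> nat \<Rightarrow> complex fps" where
  "phi1 q N = powfps q 2 (alpha1 N)"

definition phi2 :: "complex \<Rightarrow> complex \<Rightarrow> nat \<Rightarrow> nat \<Rightarrow> complex fps" where
  "phi2 q r N M = (if odd M then phi1 q N * powfps (r / q) 1 (alpha2 N) else phi1 q N)"

definition phi3 :: "complex \<Rightarrow> complex \<Rightarrow> nat \<Rightarrow> nat \<Rightarrow> nat \<Rightarrow> complex fps" where
  "phi3 q r N L M = phi1 q N *
     (if odd L \<and> odd M then powfps (1 / (r * q)) 1 (alpha2 N)
      else if odd L \<and> even M then powfps (1 / (r * q)) 1 (alpha2 N) * powfps (r * q) 1 (alpha2 N)
      else if even L \<and> odd M then powfps (r / q) 1 (alpha2 N)
      else 1)"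

definition f1 :: "complex \<Rightarrow> complex \<Rightarrow> nat \<Rightarrow> nat \<Rightarrow> nat \<Rightarrow> complex fps" where
  "f1 q r N L M =
     (if L = 0 \<and> M = 0 then phi1 q N
      else if L = 0 then (1 - fps_const r * fps_X) * phi2 q r N M
      else (1 + fps_X ^ 2) * phi3 q r N L M)"

definition g1 :: "nat \<Rightarrow> complex fps" where
  "g1 i = (if odd i then 1 else 1 - fps_X ^ 2)"

definition g2 :: "complex \<Rightarrow> complex \<Rightarrow> nat \<Rightarrow> nat \<Rightarrow> complex fps" where
  "g2 q r M i = g1 i *
     (if i = M \<and> odd M then inverse (1 - fps_const (r / q) * fps_X)
      else if i = M \<and> even M then inverse (1 - fps_const r * fps_X)
      else 1)"

definition g3 :: "complex \<Rightarrow> complex \<Rightarrow> nat \<Rightarrow> nat \<Rightarrow> nat \<Rightarrow> complex fps" where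
  "g3 q r L M i = g1 i *
     (if i = L \<and> odd L then inverse (1 - fps_const (1 / (q * r)) * fps_X)
      else if i = L \<and> even L then inverse (1 - fps_const (1 / r) * fps_X)
      else if i = L + M \<and> odd L \<and> odd M then inverse (1 - fps_const (q\<^sup>2 * r) * fps_X)
      else if i = L + M \<and> odd L \<and> even M then inverse (1 - fps_const (q * r) * fps_X)
      else if i = L + M \<and> even L \<and> odd M then inverse (1 - fps_const (r / q) * fps_X)
      else if i = L + M \<and> even L \<and> even M then inverse (1 - fps_const r * fps_X)
      else 1)"

definition gfun :: "complex \<Rightarrow> complex \<Rightarrow> nat \<Rightarrow> nat \<Rightarrow> nat \<Rightarrow> complex fps" where
  "gfun q r L M i =
     (if L = 0 \<and> M = 0 then g1 i
      else if L = 0 then g2 q r M i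
      else g3 q r L M i)"

definition cfun :: "complex fps" where
  "cfun = 1 + fps_X ^ 2"

end

theory Submission
  imports Defs
begin

text \<open>Each identity has the form F e^{X(w)} = g(w) F e^{Y(w)} for the vacuum bra
  F = <0|e^G, where X_m is a combination of annihilation modes and Y_m the matching
  combination of creation modes.  The commutator of an annihilation mode with G is a
  creation mode plus a scalar and commutes with G, so F is Gaussian: each annihilation
  mode acts on F as a creation mode plus a scalar.  Commuting the X_m through e^{Y(w)}
  then shows that both sides satisfy the same recurrence n T_n = sum_m m X_m T_{n-m}
  exactly when w g'/g = sum_m m shift_m w^m + sum_m m bracket_m w^{2m}; here shift_m comes
  from the linear part of G and bracket_m from the commutator of X_m with Y_m.  For the
  three families these scalars are computed from beta, delta and the commutation
  relations, and w g'/g turns out to be the logarithmic derivative of g_i, f_1 and c_j.\<close>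

unbundle fps_syntax

lemma sum_triangle_swap:
  fixes f :: "nat \<Rightarrow> nat \<Rightarrow> 'a::comm_monoid_add"
  shows "(\<Sum>m\<in>{a..n}. \<Sum>m'\<in>{b..n-m}. f m m') = (\<Sum>m'\<in>{b..n}. \<Sum>m\<in>{a..n-m'}. f m m')"
proof -
  have "(\<Sum>m\<in>{a..n}. \<Sum>m'\<in>{b..n-m}. f m m') = (\<Sum>m\<in>{a..n}. \<Sum>m'\<in>{y\<in>{b..n}. m + y \<le> n}. f m m')"
    by (intro sum.cong) auto
  also have "\<dots> = (\<Sum>m'\<in>{b..n}. \<Sum>m\<in>{x\<in>{a..n}. x + m' \<le> n}. f m m')"
    by (rule sum.swap_restrict) auto
  also have "\<dots> = (\<Sum>m'\<in>{b..n}. \<Sum>m\<in>{a..n-m'}. f m m')"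
    by (intro sum.cong) auto
  finally show ?thesis .
qed

lemma sum_if_le_diff:
  fixes f :: "nat \<Rightarrow> 'a::comm_monoid_add"
  shows "(\<Sum>m'\<in>{1..j}. if m \<le> j - m' then f m' else 0) = (\<Sum>m'\<in>{1..j-m}. f m')"
proof -
  have "(\<Sum>m'\<in>{1..j}. if m \<le> j - m' then f m' else 0) = (\<Sum>m'\<in>{m'\<in>{1..j}. m \<le> j - m'}. f m')"
    by (rule sum.inter_filter[symmetric]) simp
  also have "{m'\<in>{1..j}. m \<le> j - m'} = {1..j-m}" by auto
  finally show ?thesis .
qed

lemma fps_X_deriv_nth: "(fps_X * fps_deriv a) $ n = of_nat n * (a $ n :: 'a::comm_ring_1)"
  by (cases n) (simp_all add: algebra_simps)

lemma fps_mult_nth_shifted: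
  fixes a b :: "'a::comm_ring_1 fps"
  assumes "a $ 0 = 0"
  shows "(a * b) $ n = (\<Sum>i\<in>{1..n}. a $ i * b $ (n - i))"
  using assms by (simp add: fps_mult_nth sum.atLeast_Suc_atMost[of 0 n])

lemma fps_even_mult_nth:
  fixes h :: "nat \<Rightarrow> 'a::comm_ring_1"
  assumes "h 0 = 0"
  shows "(Abs_fps (\<lambda>i. if even i then h (i div 2) else 0) * b) $ n
       = (\<Sum>m\<in>{1..n}. if 2 * m \<le> n then h m * b $ (n - 2 * m) else 0)"
proof -
  have "(\<Sum>m\<in>{1..n}. if 2 * m \<le> n then h m * b $ (n - 2 * m) else 0)
      = (\<Sum>m\<in>{1..n div 2}. h m * b $ (n - 2 * m))"
    by (subst sum.inter_filter[symmetric]) (auto intro!: sum.cong)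
  also have "\<dots> = (\<Sum>m\<in>{0..n div 2}. h m * b $ (n - 2 * m))"
    using assms by (simp add: sum.atLeast_Suc_atMost[of 0 "n div 2"])
  also have "\<dots> = (\<Sum>i\<in>(\<lambda>m. 2 * m) ` {0..n div 2}. h (i div 2) * b $ (n - i))"
    by (subst sum.reindex) (auto simp: inj_on_def)
  also have "(\<lambda>m. 2 * m) ` {0..n div 2} = {i\<in>{0..n}. even i}"
    by (auto elim!: evenE)
  also have "(\<Sum>i\<in>{i\<in>{0..n}. even i}. h (i div 2) * b $ (n - i))
      = (\<Sum>i\<in>{0..n}. if even i then h (i div 2) * b $ (n - i) else 0)"
    by (rule sum.inter_filter) simp
  also have "\<dots> = (Abs_fps (\<lambda>i. if even i then h (i div 2) else 0) * b) $ n"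
    by (auto simp: fps_mult_nth intro!: sum.cong)
  finally show ?thesis ..
qed

definition fop_linear :: "fop \<Rightarrow> bool" where
  "fop_linear T \<longleftrightarrow> (\<forall>a b F H. T (\<lambda>\<mu>. a * F \<mu> + b * H \<mu>) = (\<lambda>\<mu>. a * T F \<mu> + b * T H \<mu>))"

lemma fop_linearD: "fop_linear T \<Longrightarrow> T (\<lambda>\<mu>. a * F \<mu> + b * H \<mu>) = (\<lambda>\<mu>. a * T F \<mu> + b * T H \<mu>)"
  unfolding fop_linear_def by blast

lemma fop_linear_zero: "fop_linear T \<Longrightarrow> T (\<lambda>_. 0) = (\<lambda>_. 0)"
  using fop_linearD[of T 0 "\<lambda>_. 0" 0 "\<lambda>_. 0"] by simp

lemma fop_linear_scale: "fop_linear T \<Longrightarrow> T (\<lambda>\<mu>. a * F \<mu>) = (\<lambda>\<mu>. a * T F \<mu>)"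
  using fop_linearD[of T a F 0 "\<lambda>_. 0"] by (simp add: fop_linear_zero)

lemma fop_linear_add: "fop_linear T \<Longrightarrow> T (\<lambda>\<mu>. F \<mu> + H \<mu>) = (\<lambda>\<mu>. T F \<mu> + T H \<mu>)"
  using fop_linearD[of T 1 F 1 H] by simp

lemma fop_linear_add_scale: "fop_linear T \<Longrightarrow> T (\<lambda>\<mu>. F \<mu> + c * H \<mu>) = (\<lambda>\<mu>. T F \<mu> + c * T H \<mu>)"
  using fop_linearD[of T 1 F c H] by simp

lemma fop_linear_lincomb:
  assumes "fop_linear T" "finite A"
  shows "T (\<lambda>\<mu>. \<Sum>i\<in>A. c i * H i \<mu>) = (\<lambda>\<mu>. \<Sum>i\<in>A. c i * T (H i) \<mu>)"
  using assms(2)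
proof (induction A rule: finite_induct)
  case empty
  then show ?case using fop_linear_zero[OF assms(1)] by simp
next
  case (insert x A)
  have "T (\<lambda>\<mu>. \<Sum>i\<in>insert x A. c i * H i \<mu>) = T (\<lambda>\<mu>. c x * H x \<mu> + 1 * (\<Sum>i\<in>A. c i * H i \<mu>))"
    using insert by simp
  also have "\<dots> = (\<lambda>\<mu>. c x * T (H x) \<mu> + 1 * T (\<lambda>\<mu>. \<Sum>i\<in>A. c i * H i \<mu>) \<mu>)"
    by (rule fop_linearD[OF assms(1)])
  finally show ?case using insert by simp
qed

lemma fop_linear_sum:
  assumes "fop_linear T" "finite A"
  shows "T (\<lambda>\<mu>. \<Sum>i\<in>A. H i \<mu>) = (\<lambda>\<mu>. \<Sum>i\<in>A. T (H i) \<mu>)"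
  using fop_linear_lincomb[OF assms, of "\<lambda>_. 1" H] by simp

lemma fop_linear_der: "fop_linear (der x)"
  unfolding fop_linear_def der_def by (simp add: fun_eq_iff algebra_simps)

lemma fop_linear_cre: "fop_linear (cre x)"
  unfolding fop_linear_def cre_def by (simp add: fun_eq_iff)

lemma der_cre: "der v (cre x F) = (\<lambda>\<mu>. cre x (der v F) \<mu> + (if x = v then F \<mu> else 0))"
proof (rule ext)
  fix \<mu>
  show "der v (cre x F) \<mu> = cre x (der v F) \<mu> + (if x = v then F \<mu> else 0)"
  proof (cases "x = v")
    case True
    then show ?thesis
      by (cases "v \<in># \<mu>") (auto simp: der_def cre_def algebra_simps not_in_iff
            dest!: multi_member_split)
  next
    case False
    then have "(x \<in># \<mu> + {#v#}) = (x \<in># \<mu>)" by auto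
    moreover have "x \<in># \<mu> \<Longrightarrow> \<mu> + {#v#} - {#x#} = \<mu> - {#x#} + {#v#}"
      using False by (auto simp: multiset_eq_iff)
    moreover have "x \<in># \<mu> \<Longrightarrow> count (\<mu> - {#x#}) v = count \<mu> v" using False by simp
    ultimately show ?thesis using False by (auto simp: der_def cre_def)
  qed
qed

lemma der_der: "der v (der w F) = der w (der v F)"
  by (cases "v = w") (auto simp: der_def fun_eq_iff algebra_simps add_mset_commute)

lemma cre_cre: "cre v (cre w F) = cre w (cre v F)"
proof (rule ext)
  fix \<mu>
  show "cre v (cre w F) \<mu> = cre w (cre v F) \<mu>"
  proof (cases "v = w")
    case False
    then have "(v \<in># \<mu> \<and> w \<in># \<mu> - {#v#}) = (w \<in># \<mu> \<and> v \<in># \<mu> - {#w#})"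
      by (auto simp: in_diff_count)
    then show ?thesis unfolding cre_def by (auto simp: diff_right_commute add_mset_commute)
  qed simp
qed

lemma cre_notin: "x \<notin># \<mu> \<Longrightarrow> cre x F \<mu> = 0"
  by (simp add: cre_def)

lemma der_vac: "der v vac = (\<lambda>_. 0)"
  by (simp add: der_def vac_def fun_eq_iff)

section \<open>The recurrence of a bra exponential\<close>

definition apply_modes :: "(nat \<Rightarrow> fop) \<Rightarrow> fock \<Rightarrow> nat list \<Rightarrow> fock" where
  "apply_modes Z F ms = foldl (\<lambda>H m. Z m H) F ms"

definition bra_exp_len :: "(nat \<Rightarrow> fop) \<Rightarrow> fock \<Rightarrow> nat \<Rightarrow> nat \<Rightarrow> fock" where
  "bra_exp_len Z F k n = (\<lambda>\<mu>. \<Sum>ms\<in>{ms\<in>comps n. length ms = k}. apply_modes Z F ms \<mu>)"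

lemma length_le_sum_list: "0 \<notin> set ms \<Longrightarrow> length ms \<le> sum_list (ms::nat list)"
  by (induction ms) auto

lemma finite_comps: "finite (comps n)"
proof (rule finite_subset)
  show "comps n \<subseteq> {ms. set ms \<subseteq> {0..n} \<and> length ms \<le> n}"
    unfolding comps_def using length_le_sum_list member_le_sum_list by fastforce
  show "finite {ms. set ms \<subseteq> {0..n} \<and> length ms \<le> n}"
    by (rule finite_lists_length_le) simp
qed

lemma comps_0: "comps 0 = {[]}"
proof (intro equalityI subsetI)
  fix ms assume "ms \<in> comps 0"
  then show "ms \<in> {[]}" by (cases ms) (auto simp: comps_def)
qed (auto simp: comps_def)

lemma bra_exp_0: "bra_exp Z F 0 = F"
  by (simp add: bra_exp_def comps_0 fun_eq_iff)

lemma bra_exp_eq_sum_len: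
  assumes "n < K"
  shows "bra_exp Z F n \<mu> = (\<Sum>k<K. (1 / fact k) * bra_exp_len Z F k n \<mu>)"
proof -
  have "bra_exp Z F n \<mu> = (\<Sum>ms\<in>comps n. (1 / fact (length ms)) * apply_modes Z F ms \<mu>)"
    by (simp add: bra_exp_def apply_modes_def)
  also have "\<dots> = (\<Sum>k<K. \<Sum>ms\<in>{ms\<in>comps n. length ms = k}. (1 / fact (length ms)) * apply_modes Z F ms \<mu>)"
  proof (rule sum.group[symmetric])
    show "length ` comps n \<subseteq> {..<K}"
      using length_le_sum_list assms unfolding comps_def by fastforce
  qed (simp_all add: finite_comps)
  also have "\<dots> = (\<Sum>k<K. (1 / fact k) * bra_exp_len Z F k n \<mu>)"
    unfolding bra_exp_len_def by (simp add: sum_distrib_left)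
  finally show ?thesis .
qed

lemma bra_exp_len_0: "bra_exp_len Z F 0 n = (if n = 0 then F else (\<lambda>_. 0))"
proof -
  have "{ms\<in>comps n. length ms = 0} = (if n = 0 then {[]} else {})"
    by (auto simp: comps_def)
  then show ?thesis by (auto simp: bra_exp_len_def apply_modes_def fun_eq_iff)
qed

lemma comps_length_Suc:
  "{ms\<in>comps n. length ms = Suc k} =
     (\<lambda>(m,ms). ms @ [m]) ` (SIGMA m:{1..n}. {ms\<in>comps (n-m). length ms = k})"
proof (intro equalityI subsetI)
  fix xs assume xs: "xs \<in> {ms\<in>comps n. length ms = Suc k}"
  then obtain ys y where "xs = ys @ [y]" by (cases xs rule: rev_cases) auto
  with xs show "xs \<in> (\<lambda>(m,ms). ms @ [m]) ` (SIGMA m:{1..n}. {ms\<in>comps (n-m). length ms = k})"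
    by (auto simp: comps_def image_iff intro!: bexI[of _ "(y, ys)"])
qed (auto simp: comps_def)

lemma bra_exp_len_Suc:
  assumes lin: "\<And>m. fop_linear (Z m)"
  shows "bra_exp_len Z F (Suc k) n = (\<lambda>\<mu>. \<Sum>m\<in>{1..n}. Z m (bra_exp_len Z F k (n-m)) \<mu>)"
proof (rule ext)
  fix \<mu>
  let ?S = "SIGMA m:{1..n}. {ms\<in>comps (n-m). length ms = k}"
  have inj: "inj_on (\<lambda>(m,ms). ms @ [m]) ?S"
    by (auto simp: inj_on_def)
  have fin: "\<And>m. finite {ms\<in>comps (n-m). length ms = k}"
    using finite_comps by simp
  have "bra_exp_len Z F (Suc k) n \<mu> = (\<Sum>(m,ms)\<in>?S. Z m (apply_modes Z F ms) \<mu>)"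
    unfolding bra_exp_len_def comps_length_Suc sum.reindex[OF inj]
    by (intro sum.cong) (auto simp: apply_modes_def)
  also have "\<dots> = (\<Sum>m\<in>{1..n}. \<Sum>ms\<in>{ms\<in>comps (n-m). length ms = k}. Z m (apply_modes Z F ms) \<mu>)"
    by (subst sum.Sigma) (auto simp: fin)
  also have "\<dots> = (\<Sum>m\<in>{1..n}. Z m (bra_exp_len Z F k (n-m)) \<mu>)"
    unfolding bra_exp_len_def by (simp add: fop_linear_sum[OF lin fin])
  finally show "bra_exp_len Z F (Suc k) n \<mu> = (\<Sum>m\<in>{1..n}. Z m (bra_exp_len Z F k (n-m)) \<mu>)" .
qed

text \<open>Euler's identity for the homogeneous pieces: since the Z_m commute, each of the
  k+1 factors of a word contributes its weight m equally.\<close>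
lemma bra_exp_len_weighted:
  assumes lin: "\<And>m. fop_linear (Z m)"
    and comm: "\<And>m m' H. Z m (Z m' H) = Z m' (Z m H)"
  shows "of_nat n * bra_exp_len Z F (Suc k) n \<mu>
       = of_nat (Suc k) * (\<Sum>m\<in>{1..n}. of_nat m * Z m (bra_exp_len Z F k (n-m)) \<mu>)"
proof (induction k arbitrary: n \<mu>)
  case 0
  have "(\<Sum>m\<in>{1..n}. g m * Z m (bra_exp_len Z F 0 (n-m)) \<mu>) = (if 1 \<le> n then g n * Z n F \<mu> else 0)"
    for g :: "nat \<Rightarrow> complex"
  proof -
    have "(\<Sum>m\<in>{1..n}. g m * Z m (bra_exp_len Z F 0 (n-m)) \<mu>) = (\<Sum>m\<in>{1..n}. if m = n then g n * Z n F \<mu> else 0)"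
      using fop_linear_zero[OF lin] by (intro sum.cong) (auto simp: bra_exp_len_0)
    then show ?thesis by simp
  qed
  from this[of "\<lambda>_. 1"] this[of "\<lambda>m. of_nat m"] show ?case
    by (simp add: bra_exp_len_Suc[OF lin])
next
  case (Suc k)
  let ?P = "\<lambda>k n. bra_exp_len Z F k n"
  let ?S = "\<lambda>k n \<mu>. \<Sum>m\<in>{1..n}. of_nat m * Z m (?P k (n-m)) \<mu>"
  have split: "of_nat n * Z m (?P (Suc k) (n-m)) \<mu>
      = Z m (\<lambda>\<nu>. of_nat (Suc k) * ?S k (n-m) \<nu>) \<mu> + of_nat m * Z m (?P (Suc k) (n-m)) \<mu>"
    if "m \<in> {1..n}" for m
  proof -
    have "Z m (\<lambda>\<nu>. of_nat (Suc k) * ?S k (n-m) \<nu>) = Z m (\<lambda>\<nu>. of_nat (n-m) * ?P (Suc k) (n-m) \<nu>)"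
      by (simp only: Suc.IH)
    also have "\<dots> = (\<lambda>\<nu>. of_nat (n-m) * Z m (?P (Suc k) (n-m)) \<nu>)"
      by (rule fop_linear_scale[OF lin])
    finally show ?thesis using that by (simp add: of_nat_diff algebra_simps)
  qed
  have swap: "(\<Sum>m\<in>{1..n}. Z m (\<lambda>\<nu>. ?S k (n-m) \<nu>) \<mu>) = ?S (Suc k) n \<mu>"
  proof -
    have "(\<Sum>m\<in>{1..n}. Z m (\<lambda>\<nu>. ?S k (n-m) \<nu>) \<mu>)
        = (\<Sum>m\<in>{1..n}. \<Sum>m'\<in>{1..n-m}. of_nat m' * Z m (Z m' (?P k (n-m-m'))) \<mu>)"
      by (simp add: fop_linear_lincomb[OF lin])
    also have "\<dots> = (\<Sum>m'\<in>{1..n}. \<Sum>m\<in>{1..n-m'}. of_nat m' * Z m (Z m' (?P k (n-m-m'))) \<mu>)"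
      by (rule sum_triangle_swap)
    also have "\<dots> = (\<Sum>m'\<in>{1..n}. \<Sum>m\<in>{1..n-m'}. of_nat m' * Z m' (Z m (?P k (n-m'-m))) \<mu>)"
      by (intro sum.cong refl) (metis comm diff_commute)
    also have "\<dots> = ?S (Suc k) n \<mu>"
      by (simp add: bra_exp_len_Suc[OF lin] fop_linear_sum[OF lin] sum_distrib_left)
    finally show ?thesis .
  qed
  have "of_nat n * ?P (Suc (Suc k)) n \<mu> = (\<Sum>m\<in>{1..n}. of_nat n * Z m (?P (Suc k) (n-m)) \<mu>)"
    by (simp add: bra_exp_len_Suc[OF lin] sum_distrib_left)
  also have "\<dots> = (\<Sum>m\<in>{1..n}. Z m (\<lambda>\<nu>. of_nat (Suc k) * ?S k (n-m) \<nu>) \<mu>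
      + of_nat m * Z m (?P (Suc k) (n-m)) \<mu>)"
    by (intro sum.cong refl split)
  also have "\<dots> = (\<Sum>m\<in>{1..n}. of_nat (Suc k) * Z m (\<lambda>\<nu>. ?S k (n-m) \<nu>) \<mu>) + ?S (Suc k) n \<mu>"
    by (simp only: sum.distrib fop_linear_scale[OF lin])
  also have "\<dots> = of_nat (Suc k) * ?S (Suc k) n \<mu> + ?S (Suc k) n \<mu>"
    by (simp only: swap flip: sum_distrib_left)
  finally show ?case by (simp add: algebra_simps)
qed

text \<open>The coefficients E_n of F e^{Z(w)} obey n E_n = sum_m m Z_m E_{n-m}, i.e. the
  differential equation w E' = (w Z'(w)) E.\<close>
lemma bra_exp_recurrence:
  assumes lin: "\<And>m. fop_linear (Z m)"
    and comm: "\<And>m m' H. Z m (Z m' H) = Z m' (Z m H)"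
  shows "of_nat n * bra_exp Z F n \<mu> = (\<Sum>m\<in>{1..n}. of_nat m * Z m (bra_exp Z F (n-m)) \<mu>)"
proof (cases "n = 0")
  case False
  let ?P = "bra_exp_len Z F"
  have "of_nat n * bra_exp Z F n \<mu> = (\<Sum>k<Suc n. (1 / fact k) * (of_nat n * ?P k n \<mu>))"
    by (simp add: bra_exp_eq_sum_len[of n "Suc n"] sum_distrib_left algebra_simps)
  also have "\<dots> = (\<Sum>k<n. (1 / fact (Suc k)) * (of_nat n * ?P (Suc k) n \<mu>))"
    using False by (subst sum.lessThan_Suc_shift) (simp add: bra_exp_len_0)
  also have "\<dots> = (\<Sum>m\<in>{1..n}. of_nat m * (\<Sum>k<n. (1 / fact k) * Z m (?P k (n-m)) \<mu>))"
    by (simp add: bra_exp_len_weighted[OF lin comm] field_simps sum_distrib_left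
        sum.swap[of _ "{..<n}"] del: of_nat_Suc)
  also have "\<dots> = (\<Sum>m\<in>{1..n}. of_nat m * Z m (bra_exp Z F (n-m)) \<mu>)"
  proof (intro sum.cong refl arg_cong2[where f = "(*)"])
    fix m assume "m \<in> {1..n}"
    then have "bra_exp Z F (n-m) = (\<lambda>\<nu>. \<Sum>k<n. (1 / fact k) * ?P k (n-m) \<nu>)"
      by (intro ext bra_exp_eq_sum_len) auto
    moreover have "Z m (\<lambda>\<nu>. \<Sum>k<n. (1 / fact k) * ?P k (n-m) \<nu>)
        = (\<lambda>\<nu>. \<Sum>k<n. (1 / fact k) * Z m (?P k (n-m)) \<nu>)"
      by (rule fop_linear_lincomb[OF lin]) simp
    ultimately show "(\<Sum>k<n. (1 / fact k) * Z m (?P k (n-m)) \<mu>) = Z m (bra_exp Z F (n-m)) \<mu>"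
      by simp
  qed
  finally show ?thesis .
qed simp

lemma bra_exp_cong:
  assumes "\<And>m F. m \<ge> 1 \<Longrightarrow> X m F = X' m F"
  shows "bra_exp X F0 = bra_exp X' F0"
proof -
  have "foldl (\<lambda>H m. X m H) F ms = foldl (\<lambda>H m. X' m H) F ms" if "0 \<notin> set ms" for ms F
    using that by (induction ms arbitrary: F) (auto simp: assms)
  then show ?thesis unfolding bra_exp_def comps_def by (intro ext sum.cong refl) auto
qed

section \<open>Annihilators acting on a Gaussian bra\<close>

definition mode_sum ::
    "nat set \<Rightarrow> (nat \<Rightarrow> nat \<Rightarrow> complex) \<Rightarrow> (nat \<Rightarrow> nat \<Rightarrow> bvar) \<Rightarrow> (bvar \<Rightarrow> fop) \<Rightarrow> nat \<Rightarrow> fop" where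
  "mode_sum I s var op m F = (\<lambda>\<mu>. \<Sum>l\<in>I. s m l * op (var l m) F \<mu>)"

lemma fop_linear_mode_sum:
  assumes "\<And>x. fop_linear (op x)" "finite I"
  shows "fop_linear (mode_sum I s var op m)"
  unfolding fop_linear_def mode_sum_def
  by (simp add: fop_linearD[OF assms(1)] sum.distrib sum_distrib_left algebra_simps)

lemma mode_sum_commute:
  assumes lin: "\<And>x. fop_linear (op x)" and fin: "finite I"
    and comm: "\<And>x y H. op x (op y H) = op y (op x H)"
  shows "mode_sum I s var op m (mode_sum I s var op m' H) = mode_sum I s var op m' (mode_sum I s var op m H)"
proof (rule ext)
  fix \<mu>
  have "mode_sum I s var op m (mode_sum I s var op m' H) \<mu>
      = (\<Sum>l\<in>I. \<Sum>l'\<in>I. s m l * s m' l' * op (var l m) (op (var l' m') H) \<mu>)"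
    by (simp add: mode_sum_def fop_linear_lincomb[OF lin fin] sum_distrib_left mult.assoc)
  also have "\<dots> = (\<Sum>l'\<in>I. \<Sum>l\<in>I. s m l * s m' l' * op (var l m) (op (var l' m') H) \<mu>)"
    by (rule sum.swap)
  also have "\<dots> = mode_sum I s var op m' (mode_sum I s var op m H) \<mu>"
    by (simp add: mode_sum_def fop_linear_lincomb[OF lin fin] sum_distrib_left comm algebra_simps)
  finally show "mode_sum I s var op m (mode_sum I s var op m' H) \<mu> = mode_sum I s var op m' (mode_sum I s var op m H) \<mu>" .
qed

lemma mode_sum_der_cre:
  assumes fin: "finite I"
    and inj: "\<And>l l' m m'. var l m = var l' m' \<Longrightarrow> l = l' \<and> m = m'"
  shows "mode_sum I s var der m (mode_sum I t var cre m' H)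
     = (\<lambda>\<mu>. mode_sum I t var cre m' (mode_sum I s var der m H) \<mu>
            + (if m = m' then (\<Sum>l\<in>I. s m l * t m l) else 0) * H \<mu>)"
proof (rule ext)
  fix \<mu>
  have eqv: "\<And>l l'. (var l' m' = var l m) = (l' = l \<and> m' = m)" using inj by blast
  have "mode_sum I s var der m (mode_sum I t var cre m' H) \<mu>
      = (\<Sum>l\<in>I. \<Sum>l'\<in>I. s m l * t m' l' * (cre (var l' m') (der (var l m) H) \<mu>
          + (if var l' m' = var l m then H \<mu> else 0)))"
    by (simp add: mode_sum_def fop_linear_lincomb[OF fop_linear_der fin] sum_distrib_left mult.assoc der_cre)
  also have "\<dots> = (\<Sum>l\<in>I. \<Sum>l'\<in>I. s m l * t m' l' * cre (var l' m') (der (var l m) H) \<mu>)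
      + (\<Sum>l\<in>I. \<Sum>l'\<in>I. if l' = l \<and> m' = m then s m l * t m' l' * H \<mu> else 0)"
    unfolding sum.distrib[symmetric] eqv by (intro sum.cong refl) (simp add: distrib_left)
  also have "(\<Sum>l\<in>I. \<Sum>l'\<in>I. if l' = l \<and> m' = m then s m l * t m' l' * H \<mu> else 0)
      = (if m = m' then (\<Sum>l\<in>I. s m l * t m l) else 0) * H \<mu>"
    using fin by (simp add: sum_distrib_right)
  also have "(\<Sum>l\<in>I. \<Sum>l'\<in>I. s m l * t m' l' * cre (var l' m') (der (var l m) H) \<mu>)
      = mode_sum I t var cre m' (mode_sum I s var der m H) \<mu>"
    unfolding mode_sum_def fop_linear_lincomb[OF fop_linear_cre fin] sum_distrib_left
    by (subst sum.swap) (simp add: algebra_simps)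
  finally show "mode_sum I s var der m (mode_sum I t var cre m' H) \<mu>
      = mode_sum I t var cre m' (mode_sum I s var der m H) \<mu> + (if m = m' then (\<Sum>l\<in>I. s m l * t m l) else 0) * H \<mu>" .
qed

lemma bra_exp_unique:
  assumes lin: "\<And>m. fop_linear (Z m)"
    and comm: "\<And>m m' H. Z m (Z m' H) = Z m' (Z m H)"
    and T0: "T 0 = F"
    and Trec: "\<And>n \<mu>. n \<ge> 1 \<Longrightarrow> of_nat n * T n \<mu> = (\<Sum>m\<in>{1..n}. of_nat m * Z m (T (n-m)) \<mu>)"
  shows "bra_exp Z F = T"
proof (rule ext)
  fix n show "bra_exp Z F n = T n"
  proof (induction n rule: less_induct)
    case (less n)
    show ?case
    proof (cases "n = 0")
      case False
      show ?thesis
      proof (rule ext)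
        fix \<mu>
        have "of_nat n * bra_exp Z F n \<mu> = (\<Sum>m\<in>{1..n}. of_nat m * Z m (bra_exp Z F (n-m)) \<mu>)"
          by (rule bra_exp_recurrence[OF lin comm])
        also have "\<dots> = (\<Sum>m\<in>{1..n}. of_nat m * Z m (T (n-m)) \<mu>)"
          using False by (intro sum.cong refl) (simp add: less.IH)
        also have "\<dots> = of_nat n * T n \<mu>"
          using False by (simp add: Trec)
        finally show "bra_exp Z F n \<mu> = T n \<mu>" using False by simp
      qed
    qed (simp add: bra_exp_0 T0)
  qed
qed

text \<open>X_m = sum_l s_{m,l} der_{var l m} is a combination of annihilation modes and
  Y_m = sum_l t_{m,l} cre_{var l m} the matching combination of creation modes.  F is a
  Gaussian bra: every der_{var l m} acts on F as p_{m,l} cre_{var l m} + r_{m,l}, and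
  t = s p says that X_m F = Y_m F + shift m F.\<close>
locale gaussian_bra =
  fixes I :: "nat set" and var :: "nat \<Rightarrow> nat \<Rightarrow> bvar"
    and s t p r :: "nat \<Rightarrow> nat \<Rightarrow> complex" and F :: fock
  assumes finite_I: "finite I"
    and var_inj: "\<And>l l' m m'. var l m = var l' m' \<Longrightarrow> l = l' \<and> m = m'"
    and der_F: "\<And>m l. m \<ge> 1 \<Longrightarrow> l \<in> I \<Longrightarrow>
      der (var l m) F = (\<lambda>\<mu>. p m l * cre (var l m) F \<mu> + r m l * F \<mu>)"
    and t_eq: "\<And>m l. m \<ge> 1 \<Longrightarrow> l \<in> I \<Longrightarrow> t m l = s m l * p m l"
begin

abbreviation "X \<equiv> mode_sum I s var der"
abbreviation "Y \<equiv> mode_sum I t var cre"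
abbreviation "E \<equiv> bra_exp Y F"

definition shift :: "nat \<Rightarrow> complex" where "shift m = (\<Sum>l\<in>I. s m l * r m l)"
definition bracket :: "nat \<Rightarrow> complex" where "bracket m = (\<Sum>l\<in>I. s m l * t m l)"

lemma fop_linear_X: "fop_linear (X m)"
  by (rule fop_linear_mode_sum[OF fop_linear_der finite_I])

lemma fop_linear_Y: "fop_linear (Y m)"
  by (rule fop_linear_mode_sum[OF fop_linear_cre finite_I])

lemma X_commute: "X m (X m' H) = X m' (X m H)"
  by (rule mode_sum_commute[OF fop_linear_der finite_I der_der])

lemma Y_commute: "Y m (Y m' H) = Y m' (Y m H)"
  by (rule mode_sum_commute[OF fop_linear_cre finite_I cre_cre])

lemma X_Y: "X m (Y m' H) = (\<lambda>\<mu>. Y m' (X m H) \<mu> + (if m = m' then bracket m else 0) * H \<mu>)"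
  unfolding bracket_def by (rule mode_sum_der_cre[OF finite_I var_inj])

lemma X_F: "m \<ge> 1 \<Longrightarrow> X m F = (\<lambda>\<mu>. Y m F \<mu> + shift m * F \<mu>)"
  by (auto simp: mode_sum_def shift_def der_F t_eq distrib_left sum.distrib sum_distrib_left
      algebra_simps intro!: ext sum.cong)

lemma E_recurrence: "of_nat n * E n \<mu> = (\<Sum>m\<in>{1..n}. of_nat m * Y m (E (n-m)) \<mu>)"
  by (rule bra_exp_recurrence[OF fop_linear_Y Y_commute])

lemma X_E:
  assumes m: "m \<ge> 1"
  shows "X m (E j) = (\<lambda>\<mu>. Y m (E j) \<mu> + shift m * E j \<mu> + (if m \<le> j then bracket m else 0) * E (j-m) \<mu>)"
proof (induction j rule: less_induct)
  case (less j)
  show ?case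
  proof (cases "j = 0")
    case True
    then show ?thesis using X_F[OF m] m by (simp add: bra_exp_0)
  next
    case False
    let ?c = "\<lambda>m'. of_nat m' / of_nat j :: complex"
    have Ej: "E j = (\<lambda>\<mu>. \<Sum>m'\<in>{1..j}. ?c m' * Y m' (E (j-m')) \<mu>)"
    proof (rule ext)
      fix \<mu>
      have "E j \<mu> = (\<Sum>m'\<in>{1..j}. of_nat m' * Y m' (E (j-m')) \<mu>) / of_nat j"
        using E_recurrence[of j \<mu>] False by (simp add: field_simps)
      then show "E j \<mu> = (\<Sum>m'\<in>{1..j}. ?c m' * Y m' (E (j-m')) \<mu>)"
        by (simp add: sum_divide_distrib)
    qed
    have step: "X m (Y m' (E (j-m'))) \<mu> = Y m (Y m' (E (j-m'))) \<mu> + shift m * Y m' (E (j-m')) \<mu>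
        + (if m \<le> j - m' then bracket m * Y m' (E (j-m-m')) \<mu> else 0)
        + (if m = m' then bracket m * E (j-m) \<mu> else 0)" if "m' \<in> {1..j}" for m' \<mu>
    proof -
      have "j - m' < j" using that by auto
      from less.IH[OF this] show ?thesis
        by (cases "m \<le> j - m'")
          (simp_all add: X_Y fop_linear_add[OF fop_linear_Y] fop_linear_scale[OF fop_linear_Y]
            Y_commute[of m' m] add.commute[of m' m])
    qed
    show ?thesis
    proof (rule ext)
      fix \<mu>
      have "X m (E j) \<mu> = (\<Sum>m'\<in>{1..j}. ?c m' * X m (Y m' (E (j-m'))) \<mu>)"
        by (subst Ej) (simp only: fop_linear_lincomb[OF fop_linear_X finite_atLeastAtMost])
      also have "\<dots> = (\<Sum>m'\<in>{1..j}. ?c m' * Y m (Y m' (E (j-m'))) \<mu>)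
          + shift m * (\<Sum>m'\<in>{1..j}. ?c m' * Y m' (E (j-m')) \<mu>)
          + bracket m / of_nat j * (\<Sum>m'\<in>{1..j}. if m \<le> j - m' then of_nat m' * Y m' (E (j-m-m')) \<mu> else 0)
          + (\<Sum>m'\<in>{1..j}. if m = m' then ?c m * bracket m * E (j-m) \<mu> else 0)"
        by (simp add: step sum.distrib sum_distrib_left algebra_simps if_distrib[where f = "\<lambda>x. _ * x"]
            cong: if_cong)
      also have "(\<Sum>m'\<in>{1..j}. ?c m' * Y m (Y m' (E (j-m'))) \<mu>) = Y m (E j) \<mu>"
        by (subst Ej) (simp only: fop_linear_lincomb[OF fop_linear_Y finite_atLeastAtMost])
      also have "(\<Sum>m'\<in>{1..j}. ?c m' * Y m' (E (j-m')) \<mu>) = E j \<mu>"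
        by (simp add: Ej)
      also have "(\<Sum>m'\<in>{1..j}. if m \<le> j - m' then of_nat m' * Y m' (E (j-m-m')) \<mu> else 0)
          = of_nat (j-m) * E (j-m) \<mu>"
        unfolding sum_if_le_diff by (rule E_recurrence[symmetric])
      finally have "X m (E j) \<mu> = Y m (E j) \<mu> + shift m * E j \<mu>
          + bracket m * ((of_nat (j-m) + (if m \<le> j then of_nat m else 0)) / of_nat j) * E (j-m) \<mu>"
        using m by (simp add: algebra_simps add_divide_distrib)
      moreover have "(of_nat (j-m) + (if m \<le> j then of_nat m else 0)) / of_nat j = (if m \<le> j then 1 else 0 :: complex)"
        using False by (simp add: of_nat_diff)
      ultimately show "X m (E j) \<mu> = Y m (E j) \<mu> + shift m * E j \<mu> + (if m \<le> j then bracket m else 0) * E (j-m) \<mu>"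
        by simp
    qed
  qed
qed

end

context gaussian_bra
begin

definition shift_fps :: "complex fps" where
  "shift_fps = Abs_fps (\<lambda>i. of_nat i * shift i)"

definition bracket_fps :: "complex fps" where
  "bracket_fps = Abs_fps (\<lambda>i. if even i then of_nat (i div 2) * bracket (i div 2) else 0)"

lemma shift_fps_nth: "shift_fps $ i = of_nat i * shift i"
  by (simp add: shift_fps_def)

lemma bracket_fps_nth: "bracket_fps $ i = (if even i then of_nat (i div 2) * bracket (i div 2) else 0)"
  by (simp add: bracket_fps_def)

lemma X_fps_act:
  assumes "m \<ge> 1"
  shows "X m (fps_act g E i) \<mu> = (\<Sum>k\<le>i. g $ k * (Y m (E (i-k)) \<mu> + shift m * E (i-k) \<mu>
            + (if m \<le> i-k then bracket m else 0) * E (i-k-m) \<mu>))"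
proof -
  have "X m (fps_act g E i) = (\<lambda>\<mu>. \<Sum>k\<le>i. g $ k * X m (E (i-k)) \<mu>)"
    unfolding fps_act_def by (rule fop_linear_lincomb[OF fop_linear_X]) simp
  then show ?thesis using assms by (simp add: X_E)
qed

lemma fps_act_nth: "fps_act g E k \<mu> = (g * Abs_fps (\<lambda>j. E j \<mu>)) $ k"
  by (simp add: fps_act_def fps_mult_nth atLeast0AtMost)

lemma creation_part:
  "(\<Sum>m\<in>{1..n}. \<Sum>k\<le>n-m. g $ k * (of_nat m * Y m (E (n-m-k)) \<mu>))
     = (g * (fps_X * fps_deriv (Abs_fps (\<lambda>j. E j \<mu>)))) $ n"
proof -
  have "(\<Sum>m\<in>{1..n}. \<Sum>k\<le>n-m. g $ k * (of_nat m * Y m (E (n-m-k)) \<mu>))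
      = (\<Sum>k\<le>n. g $ k * (\<Sum>m\<in>{1..n-k}. of_nat m * Y m (E (n-k-m)) \<mu>))"
    using sum_triangle_swap[where a = 1 and b = 0 and f = "\<lambda>m k. g $ k * (of_nat m * Y m (E (n-m-k)) \<mu>)"]
    by (simp add: atLeast0AtMost sum_distrib_left add.commute)
  also have "\<dots> = (\<Sum>k\<le>n. g $ k * (of_nat (n-k) * E (n-k) \<mu>))"
    by (simp only: E_recurrence)
  also have "\<dots> = (g * (fps_X * fps_deriv (Abs_fps (\<lambda>j. E j \<mu>)))) $ n"
    by (subst fps_mult_nth) (simp only: fps_X_deriv_nth atLeast0AtMost fps_nth_Abs_fps)
  finally show ?thesis .
qed

lemma bracket_part:
  "(\<Sum>m\<in>{1..n}. of_nat m * (\<Sum>k\<le>n-m. g $ k * ((if m \<le> n-m-k then bracket m else 0) * E (n-m-k-m) \<mu>)))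
     = (bracket_fps * (g * Abs_fps (\<lambda>j. E j \<mu>))) $ n"
proof -
  have inner: "(\<Sum>k\<le>n-m. g $ k * ((if m \<le> n-m-k then bracket m else 0) * E (n-m-k-m) \<mu>))
      = (if 2 * m \<le> n then bracket m * fps_act g E (n - 2 * m) \<mu> else 0)" for m
  proof (cases "2 * m \<le> n")
    case True
    have term_eq: "g $ k * ((if m \<le> n-m-k then bracket m else 0) * E (n-m-k-m) \<mu>)
        = (if k \<le> n - 2 * m then bracket m * (g $ k * E (n - 2 * m - k) \<mu>) else 0)"
      if "k \<in> {..n-m}" for k
    proof -
      have "m \<le> n-m-k \<longleftrightarrow> k \<le> n - 2 * m" using that True by auto
      moreover have "n-m-k-m = n - 2 * m - k" by arith
      ultimately show ?thesis by simp
    qed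
    have "(\<Sum>k\<le>n-m. g $ k * ((if m \<le> n-m-k then bracket m else 0) * E (n-m-k-m) \<mu>))
        = (\<Sum>k\<le>n-m. if k \<le> n - 2 * m then bracket m * (g $ k * E (n - 2 * m - k) \<mu>) else 0)"
      by (rule sum.cong[OF refl term_eq])
    also have "\<dots> = (\<Sum>k\<in>{k\<in>{..n-m}. k \<le> n - 2 * m}. bracket m * (g $ k * E (n - 2 * m - k) \<mu>))"
      by (rule sum.inter_filter[symmetric]) simp
    also have "{k\<in>{..n-m}. k \<le> n - 2 * m} = {..n - 2 * m}" using True by auto
    finally show ?thesis using True by (simp add: fps_act_def sum_distrib_left)
  qed (auto intro!: sum.neutral)
  show ?thesis
    unfolding inner bracket_fps_def fps_act_nth
    by (subst fps_even_mult_nth) (simp_all add: algebra_simps if_distrib[where f = "\<lambda>x. _ * x"] cong: if_cong)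
qed

text \<open>By X_E, X_m acting on g E splits into a creation, a shift and a bracket part;
  the differential equation for g recombines them into the coefficients of w (g E)'.\<close>
lemma fps_act_recurrence:
  assumes ode: "fps_X * fps_deriv g = (shift_fps + bracket_fps) * g"
  shows "of_nat n * fps_act g E n \<mu> = (\<Sum>m\<in>{1..n}. of_nat m * X m (fps_act g E (n-m)) \<mu>)"
proof -
  define e where "e = Abs_fps (\<lambda>j. E j \<mu>)"
  have per_mode: "of_nat m * X m (fps_act g E (n-m)) \<mu>
      = (\<Sum>k\<le>n-m. g $ k * (of_nat m * Y m (E (n-m-k)) \<mu>))
        + of_nat m * shift m * fps_act g E (n-m) \<mu>
        + of_nat m * (\<Sum>k\<le>n-m. g $ k * ((if m \<le> n-m-k then bracket m else 0) * E (n-m-k-m) \<mu>))"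
    if "m \<in> {1..n}" for m
    using that by (subst X_fps_act) (auto simp: fps_act_def distrib_left sum.distrib sum_distrib_left algebra_simps)
  have "(\<Sum>m\<in>{1..n}. of_nat m * X m (fps_act g E (n-m)) \<mu>)
      = (\<Sum>m\<in>{1..n}. \<Sum>k\<le>n-m. g $ k * (of_nat m * Y m (E (n-m-k)) \<mu>))
        + (\<Sum>m\<in>{1..n}. of_nat m * shift m * fps_act g E (n-m) \<mu>)
        + (\<Sum>m\<in>{1..n}. of_nat m * (\<Sum>k\<le>n-m. g $ k * ((if m \<le> n-m-k then bracket m else 0) * E (n-m-k-m) \<mu>)))"
    by (simp only: sum.cong[OF refl per_mode] sum.distrib)
  also have "\<dots> = (g * (fps_X * fps_deriv e)) $ n + (shift_fps * (g * e)) $ n + (bracket_fps * (g * e)) $ n"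
    unfolding creation_part bracket_part e_def
    by (simp add: shift_fps_def fps_mult_nth_shifted fps_act_nth mult.assoc)
  also have "\<dots> = (g * (fps_X * fps_deriv e) + ((shift_fps + bracket_fps) * g) * e) $ n"
    by (simp add: algebra_simps)
  also have "\<dots> = (fps_X * fps_deriv (g * e)) $ n"
    by (simp only: ode[symmetric]) (simp add: algebra_simps)
  also have "\<dots> = of_nat n * fps_act g E n \<mu>"
    by (simp only: fps_X_deriv_nth fps_act_nth e_def)
  finally show ?thesis ..
qed

theorem bra_exp_X:
  assumes "g $ 0 = 1" and "fps_X * fps_deriv g = (shift_fps + bracket_fps) * g"
  shows "bra_exp X F = fps_act g E"
proof (rule bra_exp_unique[OF fop_linear_X X_commute])
  show "fps_act g E 0 = F" using assms(1) by (simp add: fps_act_def bra_exp_0)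
qed (rule fps_act_recurrence[OF assms(2)])

end

section \<open>The vacuum bra e^G is Gaussian\<close>

text \<open>Each mode of G raises the weight of a monomial by at least one, so coefficientwise
  the series defining G and e^G are finite sums.\<close>
fun mode_index :: "bvar \<Rightarrow> nat" where
  "mode_index (VA i m) = m" | "mode_index (VC j m) = m"

definition weight :: "bvar multiset \<Rightarrow> nat" where
  "weight \<mu> = sum_mset (image_mset mode_index \<mu>)"

lemma weight_diff: "x \<in># \<mu> \<Longrightarrow> weight (\<mu> - {#x#}) + mode_index x = weight \<mu>"
proof -
  assume "x \<in># \<mu>"
  then have "\<mu> = add_mset x (\<mu> - {#x#})" by simp
  then have "weight \<mu> = weight (add_mset x (\<mu> - {#x#}))" by simp
  then show ?thesis unfolding weight_def by simp
qed

lemma weight_add: "weight (\<mu> + {#x#}) = weight \<mu> + mode_index x"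
  unfolding weight_def by simp

lemma weight_add_mset: "weight (add_mset x \<mu>) = weight \<mu> + mode_index x"
  unfolding weight_def by simp

lemma mode_index_le_weight: "x \<in># \<mu> \<Longrightarrow> mode_index x \<le> weight \<mu>"
  using weight_diff by fastforce

definition vanishes_below :: "nat \<Rightarrow> fock \<Rightarrow> bool" where
  "vanishes_below d F \<longleftrightarrow> (\<forall>\<nu>. weight \<nu> < d \<longrightarrow> F \<nu> = 0)"

lemma vanishes_below_cre: "vanishes_below d F \<Longrightarrow> mode_index x \<ge> 1 \<Longrightarrow> vanishes_below (Suc d) (cre x F)"
proof -
  assume v: "vanishes_below d F" and x: "mode_index x \<ge> 1"
  show ?thesis unfolding vanishes_below_def
  proof (intro allI impI)
    fix \<nu> assume w: "weight \<nu> < Suc d"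
    show "cre x F \<nu> = 0"
    proof (cases "x \<in># \<nu>")
      case True
      then have "weight (\<nu> - {#x#}) < d" using weight_diff[OF True] w x by linarith
      then show ?thesis using v True by (simp add: vanishes_below_def cre_def)
    qed (simp add: cre_def)
  qed
qed

lemma vanishes_below_mono: "vanishes_below d F \<Longrightarrow> d' \<le> d \<Longrightarrow> vanishes_below d' F"
  unfolding vanishes_below_def by auto

locale G_action =
  fixes q qh r :: complex and N L M :: nat
begin

abbreviation "G \<equiv> Gop q qh r N L M"

definition quad_coeff :: "nat \<Rightarrow> complex" where
  "quad_coeff m = of_nat m * inverse q ^ (2 * m) / (qnum q (int m))\<^sup>2"

definition G_mode :: "nat \<Rightarrow> fop" where
  "G_mode m F = (\<lambda>\<mu>. (\<Sum>i\<in>{1..2*N}. (- (1/2) * quad_coeff m * (-1) ^ (i + 1)) * cre (VA i m) (cre (VA i m) F) \<mu>)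
     + (\<Sum>j\<in>{1..N}. (- (1/2) * quad_coeff m) * cre (VC j m) (cre (VC j m) F) \<mu>)
     + (\<Sum>i\<in>{1..2*N}. beta q qh r L M i m * cre (VA i m) F \<mu>)
     + (\<Sum>j\<in>{1..N}. delta q m * cre (VC j m) F \<mu>))"

lemma aop_pos: "m \<ge> 1 \<Longrightarrow> aop q i (int m) = cre (VA i m)"
  by (auto simp: aop_def fun_eq_iff)

lemma cop_pos: "m \<ge> 1 \<Longrightarrow> cop q j (int m) = cre (VC j m)"
  by (auto simp: cop_def fun_eq_iff)

lemma aop_Suc: "aop q i (int (Suc k)) = cre (VA i (Suc k))"
  by (rule aop_pos) simp

lemma cop_Suc: "cop q j (int (Suc k)) = cre (VC j (Suc k))"
  by (rule cop_pos) simp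

lemma G_eq_suminf: "G F \<mu> = (\<Sum>k. G_mode (Suc k) F \<mu>)"
proof -
  have "\<And>k. (let m = Suc k in
      - (1 / 2) * (of_nat m * inverse q ^ (2 * m) / (qnum q (int m))\<^sup>2)
        * ((\<Sum>i = 1..2 * N. (-1) ^ (i + 1) * aop q i (int m) (aop q i (int m) F) \<mu>)
           + (\<Sum>j = 1..N. cop q j (int m) (cop q j (int m) F) \<mu>))
      + (\<Sum>i = 1..2 * N. beta q qh r L M i m * aop q i (int m) F \<mu>)
      + (\<Sum>j = 1..N. delta q m * cop q j (int m) F \<mu>)) = G_mode (Suc k) F \<mu>"
    unfolding Let_def aop_Suc cop_Suc G_mode_def quad_coeff_def
    by (simp add: sum_distrib_left distrib_left mult.assoc)
  then show ?thesis unfolding Gop_def by simp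
qed

lemma G_mode_commute:
  assumes lin: "fop_linear T" and comm: "\<And>x H. T (cre x H) = cre x (T H)"
  shows "T (G_mode m F) = G_mode m (T F)"
proof -
  have fin: "finite {1..2*N}" "finite {1..N}" by auto
  show ?thesis
    unfolding G_mode_def fop_linear_add[OF lin] fop_linear_lincomb[OF lin fin(1)] fop_linear_lincomb[OF lin fin(2)] comm ..
qed

lemma sum_lincomb_distrib: "(\<Sum>i\<in>A. c i * (a * X i + b * Y i)) = a * (\<Sum>i\<in>A. c i * X i) + b * (\<Sum>i\<in>A. c i * (Y i :: complex))"
  by (simp add: sum.distrib sum_distrib_left algebra_simps)

lemma fop_linear_G_mode: "fop_linear (G_mode m)"
  unfolding fop_linear_def G_mode_def
  by (simp only: fop_linearD[OF fop_linear_cre] sum_lincomb_distrib) (simp add: algebra_simps)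

lemma G_mode_out: "weight \<mu> < m \<Longrightarrow> G_mode m F \<mu> = 0"
proof -
  assume w: "weight \<mu> < m"
  have "\<And>x. mode_index x = m \<Longrightarrow> x \<notin># \<mu>" using mode_index_le_weight w by fastforce
  then show ?thesis by (simp add: G_mode_def cre_notin)
qed

lemma vanishes_below_G_mode: "vanishes_below d F \<Longrightarrow> m \<ge> 1 \<Longrightarrow> vanishes_below (Suc d) (G_mode m F)"
proof -
  assume v: "vanishes_below d F" and m: "m \<ge> 1"
  have h1: "\<And>x. mode_index x = m \<Longrightarrow> vanishes_below (Suc d) (cre x F)" using vanishes_below_cre[OF v] m by simp
  have h2: "\<And>x. mode_index x = m \<Longrightarrow> vanishes_below (Suc d) (cre x (cre x F))"
  proof -
    fix x assume "mode_index x = m"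
    then show "vanishes_below (Suc d) (cre x (cre x F))"
      using vanishes_below_mono[OF vanishes_below_cre[OF h1[OF \<open>mode_index x = m\<close>]]] m by simp
  qed
  show ?thesis using h1 h2 unfolding vanishes_below_def G_mode_def by simp
qed

lemma G_eq_sum: "weight \<mu> < K \<Longrightarrow> G F \<mu> = (\<Sum>k<K. G_mode (Suc k) F \<mu>)"
  unfolding G_eq_suminf
  by (rule suminf_finite) (auto intro: G_mode_out)

lemma vanishes_below_G: "vanishes_below d F \<Longrightarrow> vanishes_below (Suc d) (G F)"
  unfolding vanishes_below_def
proof (intro allI impI)
  fix \<nu> assume v: "\<forall>\<nu>. weight \<nu> < d \<longrightarrow> F \<nu> = 0" and w: "weight \<nu> < Suc d"
  have "G F \<nu> = (\<Sum>k<Suc (weight \<nu>). G_mode (Suc k) F \<nu>)" by (rule G_eq_sum) simp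
  also have "\<dots> = 0" using vanishes_below_G_mode[of d F] v w unfolding vanishes_below_def by simp
  finally show "G F \<nu> = 0" .
qed

lemma vanishes_below_Gpow: "vanishes_below k ((G ^^ k) vac)"
proof (induction k)
  case 0 then show ?case by (simp add: vanishes_below_def)
next
  case (Suc k) then show ?case by (simp add: vanishes_below_G)
qed

abbreviation "VG \<equiv> vacG q qh r N L M"

lemma vacG_eq_sum:
  assumes w: "weight \<mu> < K"
  shows "VG \<mu> = (\<Sum>k<K. (G ^^ k) vac \<mu> / fact k)"
  unfolding vacG_def
proof (rule suminf_finite)
  show "finite {..<K}" by simp
  fix k assume "k \<notin> {..<K}"
  then have "weight \<mu> < k" using w by simp
  then have "(G ^^ k) vac \<mu> = 0" using vanishes_below_Gpow[of k] unfolding vanishes_below_def by blast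
  then show "(G ^^ k) vac \<mu> / fact k = 0" by simp
qed

lemma fop_linear_G: "fop_linear G"
  unfolding fop_linear_def
proof (intro allI ext)
  fix a b F H \<mu>
  define K where "K = Suc (weight \<mu>)"
  have w: "weight \<mu> < K" by (simp add: K_def)
  show "G (\<lambda>\<mu>. a * F \<mu> + b * H \<mu>) \<mu> = a * G F \<mu> + b * G H \<mu>"
    unfolding G_eq_sum[OF w] fop_linearD[OF fop_linear_G_mode] by (simp add: sum.distrib sum_distrib_left)
qed

lemma G_cre: "G (cre v H) = cre v (G H)"
proof (rule ext)
  fix \<mu>
  define K where "K = Suc (weight \<mu>)"
  have w: "weight \<mu> < K" by (simp add: K_def)
  have w2: "v \<in># \<mu> \<Longrightarrow> weight (\<mu> - {#v#}) < K" using weight_diff[of v \<mu>] w by linarith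
  have "G (cre v H) \<mu> = (\<Sum>k<K. G_mode (Suc k) (cre v H) \<mu>)" by (rule G_eq_sum[OF w])
  also have "\<dots> = (\<Sum>k<K. cre v (G_mode (Suc k) H) \<mu>)"
    by (simp add: G_mode_commute[OF fop_linear_cre cre_cre])
  also have "\<dots> = cre v (G H) \<mu>"
  proof (cases "v \<in># \<mu>")
    case True
    have "cre v (G H) \<mu> = G H (\<mu> - {#v#})" using True by (simp add: cre_def)
    also have "\<dots> = (\<Sum>k<K. G_mode (Suc k) H (\<mu> - {#v#}))" by (rule G_eq_sum[OF w2[OF True]])
    also have "\<dots> = (\<Sum>k<K. cre v (G_mode (Suc k) H) \<mu>)" using True by (simp add: cre_def)
    finally show ?thesis by simp
  next
    case False
    then show ?thesis by (simp add: cre_notin)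
  qed
  finally show "G (cre v H) \<mu> = cre v (G H) \<mu>" .
qed

definition gauss_quad :: "bvar \<Rightarrow> complex" where
  "gauss_quad v = (case v of VA l m \<Rightarrow> (if 1 \<le> l \<and> l \<le> 2*N \<and> 1 \<le> m then - quad_coeff m * (-1) ^ (l + 1) else 0)
                   | VC j m \<Rightarrow> (if 1 \<le> j \<and> j \<le> N \<and> 1 \<le> m then - quad_coeff m else 0))"

definition gauss_lin :: "bvar \<Rightarrow> complex" where
  "gauss_lin v = (case v of VA l m \<Rightarrow> (if 1 \<le> l \<and> l \<le> 2*N \<and> 1 \<le> m then beta q qh r L M l m else 0)
                   | VC j m \<Rightarrow> (if 1 \<le> j \<and> j \<le> N \<and> 1 \<le> m then delta q m else 0))"

definition dG :: "bvar \<Rightarrow> fop" where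
  "dG v F = (\<lambda>\<mu>. gauss_quad v * cre v F \<mu> + gauss_lin v * F \<mu>)"

lemma der_cre_indicator: "der v (cre x F) = (\<lambda>\<mu>. cre x (der v F) \<mu> + (if x = v then 1 else 0) * F \<mu>)"
  by (simp add: der_cre)

lemma der_cre_cre: "der v (cre x (cre x F)) = (\<lambda>\<mu>. cre x (cre x (der v F)) \<mu> + (2 * (if x = v then 1 else 0)) * cre x F \<mu>)"
  by (simp add: der_cre_indicator fop_linear_add_scale[OF fop_linear_cre] fun_eq_iff)

lemma mult_indicator: "(x::complex) * (if P then 1 else 0) = (if P then x else 0)" by simp

lemma sum_delta_VA:
  fixes f :: "nat \<Rightarrow> complex"
  shows "finite A \<Longrightarrow> (\<Sum>i\<in>A. f i * (if VA i m = v then 1 else 0)) = (case v of VA l m' \<Rightarrow> if m' = m \<and> l \<in> A then f l else 0 | VC _ _ \<Rightarrow> 0)"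
proof -
  assume fA: "finite A"
  show ?thesis
  proof (cases v)
    case (VA l m')
    then show ?thesis using fA by (cases "m = m'") (simp_all add: mult_indicator sum.delta)
  qed simp_all
qed

lemma sum_delta_VC:
  fixes f :: "nat \<Rightarrow> complex"
  shows "finite A \<Longrightarrow> (\<Sum>i\<in>A. f i * (if VC i m = v then 1 else 0)) = (case v of VC l m' \<Rightarrow> if m' = m \<and> l \<in> A then f l else 0 | VA _ _ \<Rightarrow> 0)"
proof -
  assume fA: "finite A"
  show ?thesis
  proof (cases v)
    case (VC l m')
    then show ?thesis using fA by (cases "m = m'") (simp_all add: mult_indicator sum.delta)
  qed simp_all
qed

lemma der_G_mode:
  assumes m: "m \<ge> 1"
  shows "der v (G_mode m F) = (\<lambda>\<mu>. G_mode m (der v F) \<mu> + (if mode_index v = m then dG v F \<mu> else 0))"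
proof (rule ext)
  fix \<mu>
  have fin: "finite {1..2*N}" "finite {1..N}" by auto
  have "der v (G_mode m F) \<mu> = G_mode m (der v F) \<mu>
     + ((\<Sum>i\<in>{1..2*N}. (- (1/2) * quad_coeff m * (-1) ^ (i + 1) * 2 * cre (VA i m) F \<mu>) * (if VA i m = v then 1 else 0))
     + (\<Sum>j\<in>{1..N}. (- (1/2) * quad_coeff m * 2 * cre (VC j m) F \<mu>) * (if VC j m = v then 1 else 0))
     + (\<Sum>i\<in>{1..2*N}. (beta q qh r L M i m * F \<mu>) * (if VA i m = v then 1 else 0))
     + (\<Sum>j\<in>{1..N}. (delta q m * F \<mu>) * (if VC j m = v then 1 else 0)))"
    unfolding G_mode_def fop_linear_add[OF fop_linear_der] fop_linear_lincomb[OF fop_linear_der fin(1)] fop_linear_lincomb[OF fop_linear_der fin(2)] der_cre_cre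
    unfolding der_cre_indicator by (simp add: distrib_left sum.distrib algebra_simps sum_subtractf sum_negf)
  also have "(\<Sum>i\<in>{1..2*N}. (- (1/2) * quad_coeff m * (-1) ^ (i + 1) * 2 * cre (VA i m) F \<mu>) * (if VA i m = v then 1 else 0))
     + (\<Sum>j\<in>{1..N}. (- (1/2) * quad_coeff m * 2 * cre (VC j m) F \<mu>) * (if VC j m = v then 1 else 0))
     + (\<Sum>i\<in>{1..2*N}. (beta q qh r L M i m * F \<mu>) * (if VA i m = v then 1 else 0))
     + (\<Sum>j\<in>{1..N}. (delta q m * F \<mu>) * (if VC j m = v then 1 else 0))
     = (if mode_index v = m then dG v F \<mu> else 0)"
    unfolding sum_delta_VA[OF fin(1)] sum_delta_VC[OF fin(2)]
    using m by (cases v) (auto simp: dG_def gauss_quad_def gauss_lin_def algebra_simps)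
  finally show "der v (G_mode m F) \<mu> = G_mode m (der v F) \<mu> + (if mode_index v = m then dG v F \<mu> else 0)" .
qed

lemma dG_index_0: "mode_index v = 0 \<Longrightarrow> dG v F = (\<lambda>_. 0)"
  by (cases v) (auto simp: dG_def gauss_quad_def gauss_lin_def)

lemma der_G: "der v (G F) = (\<lambda>\<mu>. G (der v F) \<mu> + dG v F \<mu>)"
proof (rule ext)
  fix \<mu>
  define K where "K = Suc (weight (\<mu> + {#v#}))"
  have w1: "weight (add_mset v \<mu>) < K" by (simp add: K_def)
  have w0: "weight \<mu> < K" using w1 by (simp add: weight_add weight_add_mset)
  have "der v (G F) \<mu> = of_nat (count \<mu> v + 1) * G F (\<mu> + {#v#})" by (simp add: der_def)
  also have "\<dots> = (\<Sum>k<K. der v (G_mode (Suc k) F) \<mu>)"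
    by (simp add: G_eq_sum[OF w1] sum_distrib_left der_def)
  also have "\<dots> = (\<Sum>k<K. G_mode (Suc k) (der v F) \<mu>) + (\<Sum>k<K. if mode_index v = Suc k then dG v F \<mu> else 0)"
    by (simp add: der_G_mode sum.distrib)
  also have "(\<Sum>k<K. G_mode (Suc k) (der v F) \<mu>) = G (der v F) \<mu>" by (rule G_eq_sum[OF w0, symmetric])
  also have "(\<Sum>k<K. if mode_index v = Suc k then dG v F \<mu> else 0) = dG v F \<mu>"
  proof (cases "mode_index v")
    case 0
    then show ?thesis by (simp add: dG_index_0)
  next
    case (Suc k0)
    have e: "weight (add_mset v \<mu>) = weight \<mu> + mode_index v" by (rule weight_add_mset)
    have "k0 < K" using w1 Suc unfolding e by linarith
    then show ?thesis using Suc by simp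
  qed
  finally show "der v (G F) \<mu> = G (der v F) \<mu> + dG v F \<mu>" .
qed

lemma G_dG: "G (dG v H) = dG v (G H)"
  unfolding dG_def fop_linearD[OF fop_linear_G] G_cre ..

lemma der_Gpow: "der v ((G ^^ k) vac) = (\<lambda>\<mu>. of_nat k * dG v ((G ^^ (k - 1)) vac) \<mu>)"
proof (induction k)
  case 0
  then show ?case by (simp add: der_vac)
next
  case (Suc k)
  have "der v ((G ^^ Suc k) vac) = (\<lambda>\<mu>. G (\<lambda>\<mu>. of_nat k * dG v ((G ^^ (k - 1)) vac) \<mu>) \<mu> + dG v ((G ^^ k) vac) \<mu>)"
    by (simp add: der_G Suc.IH)
  also have "\<dots> = (\<lambda>\<mu>. of_nat k * dG v (G ((G ^^ (k - 1)) vac)) \<mu> + dG v ((G ^^ k) vac) \<mu>)"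
    by (simp add: fop_linear_scale[OF fop_linear_G] G_dG)
  also have "\<dots> = (\<lambda>\<mu>. of_nat (Suc k) * dG v ((G ^^ (Suc k - 1)) vac) \<mu>)"
  proof (cases k)
    case 0 then show ?thesis by simp
  next
    case (Suc k')
    then show ?thesis by (simp add: algebra_simps)
  qed
  finally show ?case .
qed

lemma of_nat_Suc_div_fact_Suc: "of_nat (Suc i) * x / fact (Suc i) = (x::complex) / fact i"
proof -
  have "fact (Suc i) = (of_nat (Suc i) * fact i :: complex)" by (rule fact_Suc)
  then show ?thesis by (simp del: of_nat_Suc)
qed

text \<open>Since the commutator dG v of der v with G commutes with G, the vacuum bra e^G is
  Gaussian: der v acts on it as the multiplication operator dG v.\<close>
lemma der_vacG: "der v VG = (\<lambda>\<mu>. gauss_quad v * cre v VG \<mu> + gauss_lin v * VG \<mu>)"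
proof (rule ext)
  fix \<mu>
  define K where "K = Suc (weight (\<mu> + {#v#}))"
  have w1: "weight (add_mset v \<mu>) < Suc K" by (simp add: K_def)
  have w0: "weight \<mu> < K" by (simp add: K_def weight_add weight_add_mset)
  have w2: "v \<in># \<mu> \<Longrightarrow> weight (\<mu> - {#v#}) < K" using weight_diff[of v \<mu>] w0 by linarith
  have "der v VG \<mu> = of_nat (count \<mu> v + 1) * VG (\<mu> + {#v#})" by (simp add: der_def)
  also have "\<dots> = (\<Sum>k<Suc K. der v ((G ^^ k) vac) \<mu> / fact k)"
    by (simp add: vacG_eq_sum[OF w1] sum_distrib_left der_def times_divide_eq_right distrib_left del: sum.lessThan_Suc)
  also have "\<dots> = (\<Sum>k<K. dG v ((G ^^ k) vac) \<mu> / fact k)"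
    by (subst sum.lessThan_Suc_shift) (simp only: der_Gpow of_nat_Suc_div_fact_Suc diff_Suc_1, simp)
  also have "\<dots> = gauss_quad v * (\<Sum>k<K. cre v ((G ^^ k) vac) \<mu> / fact k) + gauss_lin v * (\<Sum>k<K. (G ^^ k) vac \<mu> / fact k)"
    by (simp add: dG_def sum.distrib sum_distrib_left add_divide_distrib)
  also have "(\<Sum>k<K. (G ^^ k) vac \<mu> / fact k) = VG \<mu>" by (rule vacG_eq_sum[OF w0, symmetric])
  also have "(\<Sum>k<K. cre v ((G ^^ k) vac) \<mu> / fact k) = cre v VG \<mu>"
  proof (cases "v \<in># \<mu>")
    case True
    then show ?thesis by (simp add: cre_def vacG_eq_sum[OF w2[OF True]])
  qed (simp add: cre_notin)
  finally show "der v VG \<mu> = gauss_quad v * cre v VG \<mu> + gauss_lin v * VG \<mu>" .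
qed

end


section \<open>Logarithmic derivatives of formal power series\<close>

definition has_log_deriv :: "complex fps \<Rightarrow> complex fps \<Rightarrow> bool" where
  "has_log_deriv P K \<longleftrightarrow> fps_X * fps_deriv P = K * P"

lemma has_log_deriv_one: "has_log_deriv 1 0"
  by (simp add: has_log_deriv_def)

lemma has_log_deriv_mult:
  assumes "has_log_deriv P K1" and "has_log_deriv Q K2"
  shows "has_log_deriv (P * Q) (K1 + K2)"
proof -
  have "fps_X * fps_deriv (P * Q) = (fps_X * fps_deriv P) * Q + P * (fps_X * fps_deriv Q)"
    by (simp add: algebra_simps)
  also have "\<dots> = (K1 + K2) * (P * Q)"
    using assms unfolding has_log_deriv_def by (simp add: algebra_simps)
  finally show ?thesis by (simp add: has_log_deriv_def)
qed

lemma has_log_deriv_inverse: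
  assumes "has_log_deriv P K" "P $ 0 \<noteq> 0"
  shows "has_log_deriv (inverse P) (- K)"
proof -
  have "fps_X * fps_deriv (inverse P) = - (fps_X * fps_deriv P) * (inverse P)\<^sup>2"
    using assms(2) by (simp add: fps_inverse_deriv)
  also have "\<dots> = - K * (P * inverse P) * inverse P"
    using assms(1) by (simp add: has_log_deriv_def power2_eq_square algebra_simps)
  also have "\<dots> = - K * inverse P" using inverse_mult_eq_1'[OF assms(2)] by simp
  finally show ?thesis by (simp add: has_log_deriv_def)
qed

text \<open>The logarithmic derivative -a k sum_{j>=1} c^j z^{jk} of (1 - c z^k)^a.\<close>
definition powfps_log_deriv :: "complex \<Rightarrow> nat \<Rightarrow> complex \<Rightarrow> complex fps" where
  "powfps_log_deriv c k a = Abs_fps (\<lambda>m. if 0 < m \<and> k dvd m then - a * of_nat k * c ^ (m div k) else 0)"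

lemma powfps_log_deriv_nth_2:
  "powfps_log_deriv c 2 a $ m = (if 0 < m \<and> even m then - 2 * a * c ^ (m div 2) else 0)"
  by (simp add: powfps_log_deriv_def)

lemma fps_binomial_ode: "(1 + fps_X) * fps_deriv (fps_binomial a) = fps_const a * fps_binomial a"
proof -
  have unit: "(1 + fps_X :: 'a fps) $ 0 \<noteq> 0" by simp
  have "(1 + fps_X) * fps_deriv (fps_binomial a)
      = fps_const a * fps_binomial a * ((1 + fps_X) * inverse (1 + fps_X))"
    by (simp add: fps_binomial_deriv fps_divide_unit' algebra_simps)
  then show ?thesis using inverse_mult_eq_1'[OF unit] by simp
qed

lemma powfps_ode:
  fixes c a :: complex
  assumes k: "k \<ge> 1"
  defines "Z \<equiv> fps_const (- c) * fps_X ^ k"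
  shows "(1 + Z) * (fps_X * fps_deriv (powfps c k a)) = fps_const (a * of_nat k) * Z * powfps c k a"
proof -
  define B where "B = fps_binomial a"
  have Z0: "Z $ 0 = 0" using k by (simp add: Z_def)
  have XZ: "fps_X * fps_deriv Z = fps_const (of_nat k) * Z"
    by (rule fps_ext) (simp add: fps_X_deriv_nth Z_def fps_X_power_mult_right_nth)
  have comp: "(1 + Z) * (fps_deriv B oo Z) = fps_const a * (B oo Z)"
  proof -
    have "((1 + fps_X) * fps_deriv B) oo Z = ((1 + fps_X) oo Z) * (fps_deriv B oo Z)"
      by (rule fps_compose_mult_distrib[OF Z0])
    moreover have "(1 + fps_X) oo Z = 1 + Z"
      by (simp add: fps_compose_add_distrib Z0)
    moreover have "(fps_const a * B) oo Z = fps_const a * (B oo Z)"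
      by (simp add: fps_compose_mult_distrib[OF Z0])
    ultimately show ?thesis using fps_binomial_ode[of a] by (simp add: B_def)
  qed
  have "(1 + Z) * (fps_X * fps_deriv (B oo Z)) = ((1 + Z) * (fps_deriv B oo Z)) * (fps_X * fps_deriv Z)"
    by (simp add: fps_compose_deriv[OF Z0] algebra_simps)
  also have "\<dots> = fps_const (a * of_nat k) * Z * (B oo Z)"
    unfolding comp XZ by (simp add: algebra_simps fps_const_mult[symmetric] del: fps_const_mult)
  finally show ?thesis by (simp add: powfps_def B_def Z_def)
qed

lemma powfps_log_deriv_mult:
  fixes c a :: complex
  assumes k: "k \<ge> 1"
  defines "Z \<equiv> fps_const (- c) * fps_X ^ k"
  shows "powfps_log_deriv c k a * (1 + Z) = fps_const (a * of_nat k) * Z"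
proof (rule fps_ext)
  fix n
  let ?K = "powfps_log_deriv c k a"
  have e1: "(?K * Z) $ n = (if n < k then 0 else - c * ?K $ (n - k))"
    unfolding Z_def by (simp add: fps_X_power_mult_right_nth fps_X_power_mult_nth algebra_simps)
  have e2: "(fps_const (a * of_nat k) * Z) $ n = (if n = k then - a * of_nat k * c else 0)"
    unfolding Z_def by (simp add: fps_X_power_mult_right_nth fps_X_power_mult_nth fps_X_power_nth)
  consider "n < k" | "n = k" | "k < n" by linarith
  then have "?K $ n + (if n < k then 0 else - c * ?K $ (n - k)) = (if n = k then - a * of_nat k * c else 0)"
  proof cases
    case 1
    then have "\<not> k dvd n \<or> n = 0" using k by (auto dest: dvd_imp_le)
    then show ?thesis using 1 by (auto simp: powfps_log_deriv_def)
  next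
    case 2
    then show ?thesis using k by (simp add: powfps_log_deriv_def)
  next
    case 3
    have "k dvd n \<longleftrightarrow> k dvd (n - k)"
      using 3 by (metis dvd_diff_nat dvd_refl le_add_diff_inverse2 less_imp_le dvd_add_left_iff)
    moreover have "n div k = Suc ((n - k) div k)" using 3 k by (simp add: le_div_geq)
    ultimately show ?thesis using 3 by (auto simp: powfps_log_deriv_def algebra_simps)
  qed
  then show "(?K * (1 + Z)) $ n = (fps_const (a * of_nat k) * Z) $ n"
    unfolding e2 distrib_left fps_add_nth e1[symmetric] by simp
qed

lemma has_log_deriv_powfps:
  assumes k: "k \<ge> 1"
  shows "has_log_deriv (powfps c k a) (powfps_log_deriv c k a)"
proof -
  define Z where "Z = fps_const (- c) * fps_X ^ k"
  have "1 + Z \<noteq> 0"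
  proof
    assume "1 + Z = 0"
    then have "(1 + Z) $ 0 = 0" by simp
    then show False using k by (simp add: Z_def)
  qed
  moreover have "(1 + Z) * (fps_X * fps_deriv (powfps c k a)) = (1 + Z) * (powfps_log_deriv c k a * powfps c k a)"
    using powfps_ode[OF k, of c a] powfps_log_deriv_mult[OF k, of c a] unfolding Z_def[symmetric]
    by (simp add: mult_ac)
  ultimately show ?thesis by (simp add: has_log_deriv_def)
qed

lemma powfps_one: "k \<ge> 1 \<Longrightarrow> powfps c k 1 = 1 - fps_const c * fps_X ^ k"
  by (simp add: powfps_def fps_binomial_1 fps_compose_add_distrib fps_const_neg[symmetric]
      del: fps_const_neg)

lemma has_log_deriv_linear: "has_log_deriv (1 - fps_const c * fps_X) (powfps_log_deriv c 1 1)"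
  using has_log_deriv_powfps[of 1 c 1] powfps_one[of 1 c] by simp

lemma has_log_deriv_geometric: "has_log_deriv (inverse (1 - fps_const c * fps_X)) (- powfps_log_deriv c 1 1)"
  by (rule has_log_deriv_inverse[OF has_log_deriv_linear]) simp

lemma qnum_nonzero:
  assumes q0: "0 < cmod q" and q1: "cmod q < 1" and m: "m \<ge> 1"
  shows "qnum q (int m) \<noteq> 0"
proof -
  have qnz: "q \<noteq> 0" using q0 by auto
  have power_ne_1: "q ^ k \<noteq> 1" if "k \<ge> 1" for k
  proof -
    have "cmod (q ^ k) < 1" using q0 q1 that by (simp add: norm_power power_less_one_iff)
    then show ?thesis by auto
  qed
  have "q ^ k - inverse (q ^ k) \<noteq> 0" if "k \<ge> 1" for k
  proof
    assume "q ^ k - inverse (q ^ k) = 0"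
    then have "q ^ k * q ^ k = 1" using qnz by (simp add: field_simps)
    then have "q ^ (2 * k) = 1" by (simp add: power_add[symmetric] mult_2)
    then show False using power_ne_1[of "2 * k"] that by simp
  qed
  from this[OF m] this[of 1] show ?thesis by (simp add: qnum_def power_int_minus)
qed

definition alt_sign :: "nat \<Rightarrow> complex" where
  "alt_sign l = (-1) ^ (l + 1)"

lemma alt_sign_Suc: "alt_sign (Suc l) = - alt_sign l"
  by (simp add: alt_sign_def)

lemma sum_alt_sign_even_block: "(\<Sum>l\<in>{a<..a + 2 * k}. alt_sign l) = 0"
proof (induction k)
  case (Suc k)
  have "{a<..a + 2 * Suc k} = insert (Suc (Suc (a + 2 * k))) (insert (Suc (a + 2 * k)) {a<..a + 2 * k})"
    by auto
  then show ?case using Suc by (simp add: alt_sign_Suc)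
qed simp

lemma sum_alt_sign_greaterThan:
  assumes an: "a \<le> n"
  shows "(\<Sum>l\<in>{a<..n}. alt_sign l) = (if even (n - a) then 0 else alt_sign (Suc a))"
proof (cases "even (n - a)")
  case True
  then obtain k where "n - a = 2 * k" by (rule evenE)
  then have "n = a + 2 * k" using an by simp
  then show ?thesis using True sum_alt_sign_even_block by simp
next
  case False
  then obtain k where "n - a = 2 * k + 1" by (rule oddE)
  then have n: "n = Suc a + 2 * k" using an by simp
  have "{a<..n} = insert (Suc a) {Suc a<..Suc a + 2 * k}" using n by auto
  then show ?thesis using False sum_alt_sign_even_block[of "Suc a" k] by simp
qed

definition B_weight :: "nat \<Rightarrow> nat \<Rightarrow> complex" where
  "B_weight N l = (if l = 1 then 1 / (2 * of_nat N) else alpha2 N)"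

lemma Bmode_eq_sum:
  assumes N: "N \<ge> 1"
  shows "Bmode q N k F \<mu> = (\<Sum>l\<in>{1..2*N}. B_weight N l * aop q l k F \<mu>)"
proof -
  have s: "(\<Sum>l = 1..2 * N. aop q l k F \<mu>) = aop q 1 k F \<mu> + (\<Sum>l = 2..2 * N. aop q l k F \<mu>)"
    using N by (subst sum.atLeast_Suc_atMost) (auto simp: numeral_2_eq_2)
  have s2: "(\<Sum>l\<in>{1..2*N}. B_weight N l * aop q l k F \<mu>)
      = B_weight N 1 * aop q 1 k F \<mu> + alpha2 N * (\<Sum>l = 2..2 * N. aop q l k F \<mu>)"
    using N by (subst sum.atLeast_Suc_atMost)
      (auto simp: B_weight_def sum_distrib_left numeral_2_eq_2 intro!: sum.cong)
  show ?thesis unfolding Bmode_def Astar1_def Astar2N_def fsmul_def s s2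
    using N by (simp add: B_weight_def alpha2_def field_simps)
qed

lemma sum_B_weight_alt_sign_above:
  assumes a1: "a \<ge> 1" and a2: "a \<le> 2 * N"
  shows "(\<Sum>l\<in>{1..2*N}. B_weight N l * alt_sign l * (if l \<le> a then 0 else 1))
       = alpha2 N * (if odd a then -1 else 0)"
proof -
  have "(\<Sum>l\<in>{1..2*N}. B_weight N l * alt_sign l * (if l \<le> a then 0 else 1))
      = (\<Sum>l\<in>{1..2*N}. if \<not> l \<le> a then B_weight N l * alt_sign l else 0)"
    by (intro sum.cong) auto
  also have "\<dots> = (\<Sum>l\<in>{l\<in>{1..2*N}. \<not> l \<le> a}. B_weight N l * alt_sign l)"
    by (rule sum.inter_filter[symmetric]) simp
  also have "{l\<in>{1..2*N}. \<not> l \<le> a} = {a<..2*N}" using a1 by auto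
  also have "(\<Sum>l\<in>{a<..2*N}. B_weight N l * alt_sign l) = alpha2 N * (\<Sum>l\<in>{a<..2*N}. alt_sign l)"
    using a1 by (simp add: sum_distrib_left B_weight_def)
  also have "\<dots> = alpha2 N * (if odd a then -1 else 0)"
  proof -
    have "even (2 * N - a) \<longleftrightarrow> even a" using a2 by (simp add: even_diff_nat)
    then show ?thesis unfolding sum_alt_sign_greaterThan[OF a2] by (simp add: alt_sign_def)
  qed
  finally show ?thesis .
qed

lemma sum_B_weight_alt_sign:
  assumes N: "N \<ge> 1"
  shows "(\<Sum>l\<in>{1..2*N}. B_weight N l * alt_sign l) = 1"
proof -
  have "(\<Sum>l\<in>{1..2*N}. B_weight N l * alt_sign l)
      = (\<Sum>l\<in>{1..2*N}. (if l = 1 then B_weight N 1 * alt_sign 1 else 0)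
          + B_weight N l * alt_sign l * (if l \<le> 1 then 0 else 1))"
    by (intro sum.cong) auto
  also have "\<dots> = B_weight N 1 * alt_sign 1 + alpha2 N * (-1)"
    using N sum_B_weight_alt_sign_above[of 1 N] by (simp add: sum.distrib)
  also have "\<dots> = 1" using N by (simp add: B_weight_def alt_sign_def alpha2_def field_simps)
  finally show ?thesis .
qed

lemma sum_B_weight_square_alt_sign:
  assumes N: "N \<ge> 1"
  shows "(\<Sum>l\<in>{1..2*N}. B_weight N l * alt_sign l * B_weight N l) = 2 * alpha1 N"
proof -
  have "(\<Sum>l\<in>{1..2*N}. B_weight N l * alt_sign l * B_weight N l)
      = (\<Sum>l\<in>{1..2*N}. (if l = 1 then B_weight N 1 * alt_sign 1 * B_weight N 1 else 0)
          + alpha2 N * (B_weight N l * alt_sign l * (if l \<le> 1 then 0 else 1)))"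
    by (intro sum.cong) (auto simp: B_weight_def)
  also have "\<dots> = B_weight N 1 * alt_sign 1 * B_weight N 1 + alpha2 N * (alpha2 N * (-1))"
    using N sum_B_weight_alt_sign_above[of 1 N] by (simp add: sum.distrib sum_distrib_left[symmetric])
  also have "\<dots> = 2 * alpha1 N"
    using N by (simp add: B_weight_def alt_sign_def alpha2_def alpha1_def field_simps power2_eq_square)
  finally show ?thesis .
qed

text \<open>beta^{[1]} is constant on the pairs {2s-1, 2s}, and B_weight is constant from 2 on,
  so the alternating sum telescopes to zero.\<close>
lemma sum_B_weight_alt_sign_beta1: "(\<Sum>l\<in>{1..2*n}. B_weight N l * alt_sign l * beta1 q qh l m) = 0"
proof -
  have pairs: "(\<Sum>l\<in>{1..2*n}. B_weight N l * alt_sign l * (1 - of_nat ((l + 1) div 2))) = 0"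
  proof (induction n)
    case (Suc n)
    have "{1..2 * Suc n} = insert (Suc (Suc (2 * n))) (insert (Suc (2 * n)) {1..2*n})" by auto
    moreover have "(Suc (2 * n) + 1) div 2 = Suc n" "(Suc (Suc (2 * n)) + 1) div 2 = Suc n" by auto
    ultimately show ?case using Suc by (cases n) (auto simp: B_weight_def alt_sign_Suc)
  qed simp
  have "(\<Sum>l\<in>{1..2*n}. B_weight N l * alt_sign l * beta1 q qh l m)
      = (2 / qnum q (int m) * inverse qh ^ (3 * m) * theta m)
        * (\<Sum>l\<in>{1..2*n}. B_weight N l * alt_sign l * (1 - of_nat ((l + 1) div 2)))"
    unfolding sum_distrib_left by (intro sum.cong refl) (simp add: beta1_def divide_inverse algebra_simps)
  then show ?thesis unfolding pairs by simp
qed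

section \<open>The vertex-operator identities\<close>

locale main_setting = G_action +
  fixes R :: nat
  assumes N_pos: "N \<ge> 1" and q_pos: "0 < cmod q" and q_lt_1: "cmod q < 1" and qh_sq: "qh\<^sup>2 = q"
    and LMR: "L + M + R = 2 * N"
    and cases: "(L = 0 \<and> M = 0 \<and> R > 0) \<or> (L = 0 \<and> M > 0 \<and> R > 0) \<or> (L > 0 \<and> M > 0 \<and> R > 0)"
begin

lemma q_nonzero: "q \<noteq> 0"
  using q_pos by auto

lemma qh_nonzero: "qh \<noteq> 0"
  using q_nonzero qh_sq by auto

lemma qnum_nz: "m \<ge> 1 \<Longrightarrow> qnum q (int m) \<noteq> 0"
  using qnum_nonzero q_pos q_lt_1 by blast

lemma L_plus_M_lt: "L + M < 2 * N"
  using LMR cases by auto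

definition c_minus_coeff :: "nat \<Rightarrow> nat \<Rightarrow> complex" where
  "c_minus_coeff m l = q ^ m * (1 / qnum q (int m) * ((qnum q (int m))\<^sup>2 / of_nat m))"

definition c_plus_coeff :: "nat \<Rightarrow> nat \<Rightarrow> complex" where
  "c_plus_coeff m l = inverse q ^ m * (- (1 / qnum q (int m)))"

theorem bra_exp_c_identity:
  assumes j: "j \<in> {1..N}"
  shows "bra_exp (at_mul q (cminus q j)) VG = fps_act cfun (bra_exp (at_div q (cplus q j)) VG)"
proof -
  interpret g: gaussian_bra "{j}" VC c_minus_coeff c_plus_coeff
    "\<lambda>m l. gauss_quad (VC l m)" "\<lambda>m l. gauss_lin (VC l m)" VG
  proof
    fix m l :: nat assume "1 \<le> m" "l \<in> {j}"
    then show "c_plus_coeff m l = c_minus_coeff m l * gauss_quad (VC l m)"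
      using j qnum_nz q_nonzero
      by (auto simp: c_plus_coeff_def c_minus_coeff_def gauss_quad_def quad_coeff_def field_simps
          power2_eq_square power_mult_distrib power_mult)
  qed (simp_all add: der_vacG)
  have "g.shift_fps + g.bracket_fps = powfps_log_deriv (-1) 2 1"
  proof (rule fps_ext)
    fix m
    show "(g.shift_fps + g.bracket_fps) $ m = powfps_log_deriv (-1) 2 1 $ m"
      unfolding fps_add_nth g.shift_fps_nth g.bracket_fps_nth g.shift_def g.bracket_def
      using j qnum_nz q_nonzero
      by (auto simp: powfps_log_deriv_nth_2 c_minus_coeff_def c_plus_coeff_def gauss_lin_def delta_def
          theta_def field_simps power2_eq_square elim!: evenE)
  qed
  moreover have "cfun = powfps (-1) 2 1"
    by (simp add: powfps_one cfun_def fps_const_neg[symmetric] del: fps_const_neg)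
  ultimately have "fps_X * fps_deriv cfun = (g.shift_fps + g.bracket_fps) * cfun"
    using has_log_deriv_powfps[of 2 "-1" 1] by (simp add: has_log_deriv_def)
  then have "bra_exp g.X VG = fps_act cfun g.E"
    by (rule g.bra_exp_X[rotated]) (simp add: cfun_def)
  moreover have "bra_exp (at_mul q (cminus q j)) VG = bra_exp g.X VG"
    by (rule bra_exp_cong) (simp add: at_mul_def cminus_def cop_def mode_sum_def fsmul_def fun_eq_iff
        c_minus_coeff_def)
  moreover have "bra_exp (at_div q (cplus q j)) VG = g.E"
    by (rule bra_exp_cong) (simp add: at_div_def cplus_def cop_def mode_sum_def fsmul_def fun_eq_iff
        c_plus_coeff_def)
  ultimately show ?thesis by simp
qed

text \<open>In all three cases beta^i_m is beta^{[1],i}_m plus a constant, plus a jump step_L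
  across i = L and a jump step_LM across i = L + M.\<close>
definition beta_const :: "nat \<Rightarrow> complex" where
  "beta_const m = (if L = 0 \<and> M = 0 then 0
     else if L = 0 then - (r ^ m * inverse qh ^ (3 * m) / qnum q (int m))
     else - (2 * (-1) ^ (m div 2) * inverse qh ^ (3 * m) / qnum q (int m) * theta m))"

definition step_L :: "nat \<Rightarrow> complex" where
  "step_L m = (if L = 0 then 0 else rho q qh r L (Suc L) m)"

definition step_LM :: "nat \<Rightarrow> complex" where
  "step_LM m = (if L = 0 \<and> M = 0 then 0
     else if L = 0 then (if odd M then r ^ m * inverse qh ^ (5 * m) / qnum q (int m)
                         else r ^ m * inverse qh ^ (3 * m) / qnum q (int m))
     else sigma q qh r L M (Suc (L + M)) m)"

lemma beta_decomposition:
  "beta q qh r L M i m = beta1 q qh i m + beta_const m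
     + (if L < i then step_L m else 0) + (if L + M < i then step_LM m else 0)"
  by (cases "i \<le> L"; cases "i \<le> L + M")
     (auto simp: beta_def beta2_def beta3_def rho_def sigma_def beta_const_def step_L_def step_LM_def)

text \<open>beta is multiplied by beta_scale m = q^{3m/2} [m] when it enters the logarithmic derivatives.\<close>
definition beta_scale :: "nat \<Rightarrow> complex" where
  "beta_scale m = q ^ m * qh ^ m * qnum q (int m)"

definition rho_base :: complex where
  "rho_base = (if odd L then 1 / (q * r) else 1 / r)"

definition sigma_base :: complex where
  "sigma_base = (if L = 0 then (if odd M then r / q else r)
     else if odd L \<and> odd M then q\<^sup>2 * r else if odd L \<and> even M then q * r
     else if even L \<and> odd M then r / q else r)"

lemma q_power: "q ^ m = (qh ^ m)\<^sup>2"
  unfolding qh_sq[symmetric] by (simp flip: power_mult add: mult.commute)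

lemma beta_scale_div:
  assumes "m \<ge> 1"
  shows "beta_scale m * (x / qnum q (int m)) = x * (qh ^ m) ^ 3"
  using qnum_nz[OF assms] by (simp add: beta_scale_def q_power field_simps power3_eq_cube power2_eq_square)

lemma beta_scale_qh_powers:
  assumes "m \<ge> 1"
  shows "beta_scale m * (x * inverse qh ^ (3 * m) / qnum q (int m)) = x"
    and "beta_scale m * (x * inverse qh ^ (5 * m) / qnum q (int m)) = x * inverse q ^ m"
    and "beta_scale m * (x * qh ^ m / qnum q (int m)) = x * q ^ m * q ^ m"
    and "beta_scale m * (x * inverse qh ^ m / qnum q (int m)) = x * q ^ m"
proof -
  have qh: "qh ^ (k * m) = (qh ^ m) ^ k" for k by (simp flip: power_mult add: mult.commute)
  have w: "qh ^ m \<noteq> 0" using qh_nonzero by simp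
  show "beta_scale m * (x * inverse qh ^ (3 * m) / qnum q (int m)) = x"
    "beta_scale m * (x * inverse qh ^ (5 * m) / qnum q (int m)) = x * inverse q ^ m"
    "beta_scale m * (x * qh ^ m / qnum q (int m)) = x * q ^ m * q ^ m"
    "beta_scale m * (x * inverse qh ^ m / qnum q (int m)) = x * q ^ m"
    unfolding beta_scale_div[OF assms] power_inverse qh q_power using w qh_nonzero
    by (simp_all add: field_simps eval_nat_numeral)
qed

lemma beta_scale_beta_const:
  assumes "m \<ge> 1"
  shows "beta_scale m * beta_const m
       = (if L = 0 \<and> M = 0 then 0 else if L = 0 then - (r ^ m) else - (2 * (-1) ^ (m div 2) * theta m))"
proof -
  have "beta_scale m * beta_const m = (if L = 0 \<and> M = 0 then 0
      else if L = 0 then - (beta_scale m * (r ^ m * inverse qh ^ (3 * m) / qnum q (int m)))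
      else - (beta_scale m * ((2 * (-1) ^ (m div 2) * theta m) * inverse qh ^ (3 * m) / qnum q (int m))))"
    by (simp add: beta_const_def divide_inverse mult_ac)
  then show ?thesis by (simp only: beta_scale_qh_powers(1)[OF assms])
qed

lemma beta_scale_step_L:
  assumes "m \<ge> 1" "L > 0"
  shows "beta_scale m * step_L m = rho_base ^ m"
  unfolding step_L_def rho_def rho_base_def
  using assms beta_scale_qh_powers(1,2)[OF assms(1), of "inverse r ^ m"]
  by (simp add:  rho_base_def power_divide divide_inverse power_inverse
      power_mult_distrib mult_ac)

lemma beta_scale_step_LM:
  assumes "m \<ge> 1" "L + M > 0"
  shows "beta_scale m * step_LM m = sigma_base ^ m"
  unfolding step_LM_def sigma_def sigma_base_def
  using assms beta_scale_qh_powers[OF assms(1), of "r ^ m"]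
  by (auto simp: divide_inverse power_inverse power_mult_distrib
      power2_eq_square mult_ac)

lemma beta_scale_beta1_diff:
  assumes "m \<ge> 1"
  shows "beta_scale m * (beta1 q qh (Suc i) m - beta1 q qh i m) = (if even i then - 2 * theta m else 0)"
proof (cases "even i")
  case True
  then obtain k where "i = 2 * k" by (auto elim: evenE)
  then have "beta1 q qh (Suc i) m - beta1 q qh i m = - (2 * theta m) * inverse qh ^ (3 * m) / qnum q (int m)"
    by (simp add: beta1_def divide_inverse algebra_simps)
  then show ?thesis using True beta_scale_qh_powers(1)[OF assms] by simp
next
  case False
  then obtain k where "i = 2 * k + 1" by (auto elim: oddE)
  then show ?thesis using False by (simp add: beta1_def)
qed

lemma beta_scale_beta_diff:
  assumes m: "m \<ge> 1" and i: "i \<ge> 1"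
  shows "beta_scale m * (beta q qh r L M (Suc i) m - beta q qh r L M i m)
       = (if even i then - 2 * theta m else 0)
         + (if i = L then rho_base ^ m else if i = L + M then sigma_base ^ m else 0)"
proof -
  have "beta q qh r L M (Suc i) m - beta q qh r L M i m
      = (beta1 q qh (Suc i) m - beta1 q qh i m)
        + (if i = L then step_L m else 0) + (if i = L + M then step_LM m else 0)"
    by (simp add: beta_decomposition less_Suc_eq)
  moreover have "i = L \<Longrightarrow> L > 0 \<and> M > 0" using cases i by auto
  ultimately show ?thesis
    using i beta_scale_beta1_diff[OF m] beta_scale_step_L[OF m] beta_scale_step_LM[OF m]
    by (cases "i = L") (simp_all add: distrib_left)
qed

definition A_factor :: "nat \<Rightarrow> complex fps" where
  "A_factor i = (if i = L then inverse (1 - fps_const rho_base * fps_X)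
     else if i = L + M then inverse (1 - fps_const sigma_base * fps_X) else 1)"

definition A_log_deriv :: "nat \<Rightarrow> complex fps" where
  "A_log_deriv i = (if i = L then - powfps_log_deriv rho_base 1 1
     else if i = L + M then - powfps_log_deriv sigma_base 1 1 else 0)"

lemma gfun_eq_A_factor:
  assumes "i \<ge> 1"
  shows "gfun q r L M i = g1 i * A_factor i"
  unfolding gfun_def g2_def g3_def A_factor_def rho_base_def sigma_base_def
  using cases assms by auto

lemma has_log_deriv_g1: "has_log_deriv (g1 i) (if odd i then 0 else powfps_log_deriv 1 2 1)"
  using has_log_deriv_powfps[of 2 1 1]
  by (simp add: g1_def powfps_one has_log_deriv_one)

lemma has_log_deriv_A_factor: "has_log_deriv (A_factor i) (A_log_deriv i)"
  unfolding A_factor_def A_log_deriv_def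
  by (simp only: split: if_split) (blast intro: has_log_deriv_geometric has_log_deriv_one)

definition A_minus_coeff :: "nat \<Rightarrow> nat \<Rightarrow> nat \<Rightarrow> complex" where
  "A_minus_coeff i m l =
     - (q ^ m * (qh ^ m / qnum q (int m) * ((-1) ^ (i + 1) * ((-1) ^ (l + 1) * (qnum q (int m))\<^sup>2 / of_nat m))))"

definition A_plus_coeff :: "nat \<Rightarrow> nat \<Rightarrow> nat \<Rightarrow> complex" where
  "A_plus_coeff i m l = - (inverse q ^ m * (- (qh ^ m / qnum q (int m)) * (-1) ^ (i + 1)))"

theorem bra_exp_A_identity:
  assumes i: "i \<in> {1..2*N-1}"
  shows "bra_exp (sneg (at_mul q (Aminus q i qh))) VG
       = fps_act (gfun q r L M i) (bra_exp (sneg (at_div q (Aplus q i qh))) VG)"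
proof -
  have il: "1 \<le> l \<and> l \<le> 2 * N" if "l \<in> {i, Suc i}" for l using i that by auto
  interpret g: gaussian_bra "{i, Suc i}" VA "A_minus_coeff i" "A_plus_coeff i"
    "\<lambda>m l. gauss_quad (VA l m)" "\<lambda>m l. gauss_lin (VA l m)" VG
  proof
    fix m l :: nat assume "1 \<le> m" "l \<in> {i, Suc i}"
    then show "A_plus_coeff i m l = A_minus_coeff i m l * gauss_quad (VA l m)"
      using il qnum_nz q_nonzero
      by (simp add: A_plus_coeff_def A_minus_coeff_def gauss_quad_def quad_coeff_def field_simps
          power2_eq_square power_mult_distrib power_mult)
  qed (simp_all add: der_vacG)
  have shift_nth: "g.shift_fps $ m = beta_scale m * (beta q qh r L M (Suc i) m - beta q qh r L M i m)"
    if "m \<ge> 1" for m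
  proof -
    have "g.shift_fps $ m = of_nat m * (A_minus_coeff i m i * gauss_lin (VA i m)
        + A_minus_coeff i m (Suc i) * gauss_lin (VA (Suc i) m))"
      unfolding g.shift_fps_nth g.shift_def by simp
    also have "\<dots> = beta_scale m * (beta q qh r L M (Suc i) m - beta q qh r L M i m)"
      using il[of i] il[of "Suc i"] that qnum_nz[OF that]
      by (simp add: A_minus_coeff_def gauss_lin_def beta_scale_def field_simps power2_eq_square)
    finally show ?thesis .
  qed
  have "g.shift_fps + g.bracket_fps = (if odd i then 0 else powfps_log_deriv 1 2 1) + A_log_deriv i"
  proof (rule fps_ext)
    fix m
    have "g.bracket_fps $ m = 0"
      unfolding g.bracket_fps_nth g.bracket_def by (simp add: A_minus_coeff_def A_plus_coeff_def algebra_simps)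
    then show "(g.shift_fps + g.bracket_fps) $ m = ((if odd i then 0 else powfps_log_deriv 1 2 1) + A_log_deriv i) $ m"
      using shift_nth[of m] beta_scale_beta_diff[of m i] i
      by (cases "m = 0") (auto simp: g.shift_fps_nth A_log_deriv_def powfps_log_deriv_def theta_def)
  qed
  moreover have "has_log_deriv (gfun q r L M i) ((if odd i then 0 else powfps_log_deriv 1 2 1) + A_log_deriv i)"
    using i gfun_eq_A_factor has_log_deriv_mult[OF has_log_deriv_g1 has_log_deriv_A_factor] by simp
  moreover have "gfun q r L M i $ 0 = 1"
    using i gfun_eq_A_factor by (simp add: g1_def A_factor_def)
  ultimately have "bra_exp g.X VG = fps_act (gfun q r L M i) g.E"
    by (intro g.bra_exp_X) (simp_all add: has_log_deriv_def)
  moreover have "bra_exp (sneg (at_mul q (Aminus q i qh))) VG = bra_exp g.X VG"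
    by (rule bra_exp_cong) (simp add: sneg_def at_mul_def Aminus_def Aop_def aop_def fsmul_def fadd_def
        mode_sum_def fun_eq_iff A_minus_coeff_def algebra_simps)
  moreover have "bra_exp (sneg (at_div q (Aplus q i qh))) VG = g.E"
    by (rule bra_exp_cong) (simp add: sneg_def at_div_def Aplus_def Aop_def aop_def fsmul_def fadd_def
        mode_sum_def fun_eq_iff A_plus_coeff_def algebra_simps)
  ultimately show ?thesis by simp
qed

lemma sum_B_weight_alt_sign_step:
  assumes "a \<le> 2 * N" and "a = 0 \<Longrightarrow> v = 0"
  shows "(\<Sum>l\<in>{1..2*N}. B_weight N l * alt_sign l * (if a < l then v else 0))
       = (if odd a then - alpha2 N * v else 0)"
proof (cases "a = 0")
  case False
  have "(\<Sum>l\<in>{1..2*N}. B_weight N l * alt_sign l * (if a < l then v else 0))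
      = v * (\<Sum>l\<in>{1..2*N}. B_weight N l * alt_sign l * (if l \<le> a then 0 else 1))"
    by (auto simp: sum_distrib_left intro!: sum.cong)
  then show ?thesis using False assms sum_B_weight_alt_sign_above[of a N] by simp
qed (use assms in simp)

lemma sum_B_weight_alt_sign_beta:
  "(\<Sum>l\<in>{1..2*N}. B_weight N l * alt_sign l * beta q qh r L M l m)
     = beta_const m + (if odd L then - alpha2 N * step_L m else 0)
       + (if odd (L + M) then - alpha2 N * step_LM m else 0)"
proof -
  let ?w = "\<lambda>l. B_weight N l * alt_sign l"
  have "(\<Sum>l\<in>{1..2*N}. ?w l * beta q qh r L M l m)
      = (\<Sum>l\<in>{1..2*N}. ?w l * beta1 q qh l m) + beta_const m * (\<Sum>l\<in>{1..2*N}. ?w l)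
        + (\<Sum>l\<in>{1..2*N}. ?w l * (if L < l then step_L m else 0))
        + (\<Sum>l\<in>{1..2*N}. ?w l * (if L + M < l then step_LM m else 0))"
    by (simp add: beta_decomposition distrib_left sum.distrib sum_distrib_left mult_ac)
  moreover have "L = 0 \<Longrightarrow> step_L m = 0" "L + M = 0 \<Longrightarrow> step_LM m = 0"
    unfolding step_L_def step_LM_def by simp_all
  ultimately show ?thesis
    using L_plus_M_lt N_pos sum_B_weight_alt_sign_beta1[where n = N] sum_B_weight_alt_sign[of N]
      sum_B_weight_alt_sign_step[of L "step_L m"] sum_B_weight_alt_sign_step[of "L + M" "step_LM m"]
    by simp
qed

definition B_const_fps :: "complex fps" where
  "B_const_fps = (if L = 0 \<and> M = 0 then 0
     else if L = 0 then powfps_log_deriv r 1 1 else powfps_log_deriv (-1) 2 1)"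

definition B_log_deriv :: "complex fps" where
  "B_log_deriv = B_const_fps + powfps_log_deriv q 2 (alpha1 N)
     + (if odd L then powfps_log_deriv rho_base 1 (alpha2 N) else 0)
     + (if odd (L + M) then powfps_log_deriv sigma_base 1 (alpha2 N) else 0)"

lemma B_const_fps_nth:
  assumes "m \<ge> 1"
  shows "B_const_fps $ m = beta_scale m * beta_const m"
  using assms by (simp add: beta_scale_beta_const B_const_fps_def powfps_log_deriv_def theta_def)

lemma has_log_deriv_phi1: "has_log_deriv (phi1 q N) (powfps_log_deriv q 2 (alpha1 N))"
  unfolding phi1_def by (rule has_log_deriv_powfps) simp

lemma has_log_deriv_1_plus_X2: "has_log_deriv (1 + fps_X ^ 2) (powfps_log_deriv (-1) 2 1)"
  using has_log_deriv_powfps[of 2 "-1" 1]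
  by (simp add: powfps_one fps_const_neg[symmetric] del: fps_const_neg)

lemma has_log_deriv_phi2:
  "has_log_deriv (phi2 q r N M)
     (powfps_log_deriv q 2 (alpha1 N) + (if odd M then powfps_log_deriv (r / q) 1 (alpha2 N) else 0))"
  using has_log_deriv_mult[OF has_log_deriv_phi1 has_log_deriv_powfps[of 1 "r / q" "alpha2 N"]]
    has_log_deriv_phi1
  by (simp add: phi2_def)

lemma has_log_deriv_phi3:
  "has_log_deriv (phi3 q r N L M)
     (powfps_log_deriv q 2 (alpha1 N)
      + ((if odd L then powfps_log_deriv (1 / (r * q)) 1 (alpha2 N) else 0)
         + (if odd (L + M) then powfps_log_deriv (if odd L then r * q else r / q) 1 (alpha2 N) else 0)))"
proof -
  let ?P = "\<lambda>c. powfps c 1 (alpha2 N)" and ?K = "\<lambda>c. powfps_log_deriv c 1 (alpha2 N)"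
  have pow: "has_log_deriv (?P c) (?K c)" for c by (rule has_log_deriv_powfps) simp
  show ?thesis
    unfolding phi3_def
    using has_log_deriv_mult[OF has_log_deriv_phi1 pow]
      has_log_deriv_mult[OF has_log_deriv_phi1 has_log_deriv_mult[OF pow pow]]
      has_log_deriv_mult[OF has_log_deriv_phi1 has_log_deriv_one]
    by (cases "odd L"; cases "odd M") simp_all
qed

lemma has_log_deriv_f1: "has_log_deriv (f1 q r N L M) B_log_deriv"
  unfolding f1_def B_log_deriv_def B_const_fps_def rho_base_def sigma_base_def
  using cases has_log_deriv_phi1
    has_log_deriv_mult[OF has_log_deriv_linear has_log_deriv_phi2, of r]
    has_log_deriv_mult[OF has_log_deriv_1_plus_X2 has_log_deriv_phi3]
  by (auto simp: add.assoc mult.commute[of r q])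

definition B_minus_coeff :: "nat \<Rightarrow> nat \<Rightarrow> complex" where
  "B_minus_coeff m l = q ^ m * (qh ^ m / qnum q (int m) * (B_weight N l * ((-1) ^ (l + 1) * (qnum q (int m))\<^sup>2 / of_nat m)))"

definition B_plus_coeff :: "nat \<Rightarrow> nat \<Rightarrow> complex" where
  "B_plus_coeff m l = inverse q ^ m * (- (qh ^ m / qnum q (int m)) * B_weight N l)"

theorem bra_exp_B_identity:
  "bra_exp (at_mul q (Bminus q N qh)) VG = fps_act (f1 q r N L M) (bra_exp (at_div q (Bplus q N qh)) VG)"
proof -
  interpret g: gaussian_bra "{1..2*N}" VA B_minus_coeff B_plus_coeff
    "\<lambda>m l. gauss_quad (VA l m)" "\<lambda>m l. gauss_lin (VA l m)" VG
  proof
    fix m l :: nat assume "1 \<le> m" "l \<in> {1..2*N}"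
    then show "B_plus_coeff m l = B_minus_coeff m l * gauss_quad (VA l m)"
      using qnum_nz q_nonzero
      by (simp add: B_plus_coeff_def B_minus_coeff_def gauss_quad_def quad_coeff_def field_simps
          power2_eq_square power_mult_distrib power_mult)
  qed (simp_all add: der_vacG)
  have shift_nth: "g.shift_fps $ m = beta_scale m * (\<Sum>l\<in>{1..2*N}. B_weight N l * alt_sign l * beta q qh r L M l m)"
    if m: "m \<ge> 1" for m
  proof -
    have "g.shift_fps $ m = (\<Sum>l\<in>{1..2*N}. of_nat m * B_minus_coeff m l * beta q qh r L M l m)"
      unfolding g.shift_fps_nth g.shift_def sum_distrib_left
      using m by (intro sum.cong refl) (auto simp: gauss_lin_def mult.assoc)
    also have "\<dots> = (\<Sum>l\<in>{1..2*N}. beta_scale m * (B_weight N l * alt_sign l * beta q qh r L M l m))"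
      using m qnum_nz[OF m]
      by (intro sum.cong refl) (simp add: B_minus_coeff_def alt_sign_def beta_scale_def field_simps power2_eq_square)
    finally show ?thesis by (simp add: sum_distrib_left)
  qed
  have bracket: "g.bracket k = - (q ^ k / of_nat k) * (2 * alpha1 N)" if k: "k \<ge> 1" for k
  proof -
    have "g.bracket k = (\<Sum>l\<in>{1..2*N}. - (q ^ k / of_nat k) * (B_weight N l * alt_sign l * B_weight N l))"
      unfolding g.bracket_def using k qnum_nz[OF k] q_nonzero q_power[of k, unfolded power2_eq_square, symmetric]
      by (intro sum.cong refl)
        (simp add: B_minus_coeff_def B_plus_coeff_def alt_sign_def field_simps power2_eq_square power_mult_distrib)
    also have "\<dots> = - (q ^ k / of_nat k) * (2 * alpha1 N)"
      unfolding sum_distrib_left[symmetric] sum_B_weight_square_alt_sign[OF N_pos] ..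
    finally show ?thesis .
  qed
  have "g.shift_fps + g.bracket_fps = B_log_deriv"
  proof (rule fps_ext)
    fix m
    show "(g.shift_fps + g.bracket_fps) $ m = B_log_deriv $ m"
    proof (cases "m = 0")
      case False
      then have m: "m \<ge> 1" by simp
      have "g.bracket_fps $ m = (if even m then - (2 * alpha1 N) * q ^ (m div 2) else 0)"
      proof (cases "even m")
        case True
        then have k: "m div 2 \<ge> 1" using m by (auto elim: evenE)
        show ?thesis unfolding g.bracket_fps_nth bracket[OF k] using True k by simp
      qed (unfold g.bracket_fps_nth, simp)
      have step_terms:
        "(if odd L then - alpha2 N * (beta_scale m * step_L m) else 0) = (if odd L then - alpha2 N * rho_base ^ m else 0)"
        "(if odd (L + M) then - alpha2 N * (beta_scale m * step_LM m) else 0)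
           = (if odd (L + M) then - alpha2 N * sigma_base ^ m else 0)"
        using beta_scale_step_L[OF m] beta_scale_step_LM[OF m] odd_pos[of L] odd_pos[of "L + M"] by auto
      have "(g.shift_fps + g.bracket_fps) $ m
          = beta_scale m * (beta_const m + (if odd L then - alpha2 N * step_L m else 0)
              + (if odd (L + M) then - alpha2 N * step_LM m else 0))
            + (if even m then - (2 * alpha1 N) * q ^ (m div 2) else 0)"
        unfolding fps_add_nth shift_nth[OF m] sum_B_weight_alt_sign_beta \<open>g.bracket_fps $ m = _\<close> ..
      also have "\<dots> = beta_scale m * beta_const m
            + (if odd L then - alpha2 N * (beta_scale m * step_L m) else 0)
            + (if odd (L + M) then - alpha2 N * (beta_scale m * step_LM m) else 0)
            + (if even m then - (2 * alpha1 N) * q ^ (m div 2) else 0)"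
        by (simp add: algebra_simps)
      also have "\<dots> = B_log_deriv $ m"
        unfolding step_terms B_const_fps_nth[OF m, symmetric] B_log_deriv_def
        using m by (simp add: powfps_log_deriv_def algebra_simps)
      finally show ?thesis .
    qed (unfold fps_add_nth g.shift_fps_nth g.bracket_fps_nth B_log_deriv_def B_const_fps_def,
        simp add: powfps_log_deriv_def)
  qed
  moreover have "f1 q r N L M $ 0 = 1"
    by (simp add: f1_def phi1_def phi2_def phi3_def powfps_def fps_compose_nth)
  ultimately have "bra_exp g.X VG = fps_act (f1 q r N L M) g.E"
    using has_log_deriv_f1 by (intro g.bra_exp_X) (simp_all add: has_log_deriv_def)
  moreover have "bra_exp (at_mul q (Bminus q N qh)) VG = bra_exp g.X VG"
    by (rule bra_exp_cong) (simp add: at_mul_def Bminus_def fsmul_def fun_eq_iff Bmode_eq_sum[OF N_pos]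
        aop_def mode_sum_def B_minus_coeff_def sum_distrib_left algebra_simps)
  moreover have "bra_exp (at_div q (Bplus q N qh)) VG = g.E"
    by (rule bra_exp_cong) (simp add: at_div_def Bplus_def fsmul_def fun_eq_iff Bmode_eq_sum[OF N_pos]
        aop_def mode_sum_def B_plus_coeff_def sum_distrib_left algebra_simps)
  ultimately show ?thesis by simp
qed

end

theorem mainTheorem1:
  fixes N L M R :: nat and q qh r :: complex
  assumes "N \<ge> 1"
    and "0 < cmod q" and "cmod q < 1"
    and "qh\<^sup>2 = q"
    and "L + M + R = 2 * N"
    and "(L = 0 \<and> M = 0 \<and> R > 0) \<or> (L = 0 \<and> M > 0 \<and> R > 0) \<or> (L > 0 \<and> M > 0 \<and> R > 0)"
  shows "(\<forall>i \<in> {1..2 * N - 1}.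
            bra_exp (sneg (at_mul q (Aminus q i qh))) (vacG q qh r N L M)
          = fps_act (gfun q r L M i) (bra_exp (sneg (at_div q (Aplus q i qh))) (vacG q qh r N L M)))
       \<and> bra_exp (at_mul q (Bminus q N qh)) (vacG q qh r N L M)
          = fps_act (f1 q r N L M) (bra_exp (at_div q (Bplus q N qh)) (vacG q qh r N L M))
       \<and> (\<forall>j \<in> {1..N}.
            bra_exp (at_mul q (cminus q j)) (vacG q qh r N L M)
          = fps_act cfun (bra_exp (at_div q (cplus q j)) (vacG q qh r N L M)))"
proof -
  interpret main_setting q qh r N L M R
    using assms by unfold_locales auto
  show ?thesis
    using bra_exp_A_identity bra_exp_B_identity bra_exp_c_identity by blast
qed

end
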